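(* In the setting described in the context (bad trader), the following hold: (i) $pnl=(\mathcal{Q}+J^sq+(1-J^s)Q)^{\theta}_{(0)}-(\mathcal{P}+P)^{\theta}_{(0)}-h-(1-J^e)(1-J^s_\theta)Q_\theta$; (ii) $\mathrm{HVA}=(J^s(q-Q))^{\theta}+D+J^eD'+va(K^\theta)$, where $D_t=\mathbb{E}_t[J^s_\theta Q_\theta]$, $D'_t=\mathbb{E}_t[(1-J^s_\theta)Q_\theta]$, and $va(K^\theta)_t=\mathcal{Q}_{t\wedge\theta}+Q_{t\wedge\theta}-\mathbb{E}_t[\mathcal{Q}_\theta+Q_\theta]$; (iii) $\mathrm{HVA}_0=q_0-\mathbb{E}_0[\mathcal{Q}_\theta]$; (iv) $-pnl+(\mathrm{HVA}-\mathrm{HVA}_0)=-(\mathcal{Q}+Q)^{\theta}_{(0)}+(\mathcal{P}+P)^{\theta}_{(0)}+h+(1-J^e)(1-J^s_\theta)Q_\theta+(D-D_0)+(J^eD'-J^e_0D'_0)+(va(K^\theta)-va(K^\theta)_0)$.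
   Context: Let $(\Omega,\mathcal{A},\mathbb{Q})$ be a probability space with a filtration $\mathfrak{F}=(\mathfrak{F}_t)_{0\le t\le T}$ satisfying the usual conditions; $\mathbb{E}_t$ is conditional expectation given $\mathfrak{F}_t$. All processes are adapted, càdlàg, and integrable enough for the conditional expectations to exist. For an integrable adapted process $X$, $va(X)_t=\mathbb{E}_t[X_T-X_t]$. A cash flow is an optional integrable process $\mathcal{Y}$ with $\mathcal{Y}_0=0$; its fair callable value is $\widetilde{va}(\mathcal{Y})_t=\sup_{\tau\in\mathcal{T}^t}\mathbb{E}_t[\mathcal{Y}_\tau-\mathcal{Y}_t]$, $\mathcal{T}^t$ the set of $[t,T]$-valued stopping times. Notation: $X_{(0)}=X-X_0$; $X^\theta$ is $X$ stopped at $\theta$. Data: a cash flow $\mathcal{Q}$ (promised on the callable asset) with $Q=\widetilde{va}(\mathcal{Q})$; $K$ is the drift of $\mathcal{Q}+Q$ (the unique nondecreasing integrable predictable process with $K_0=0$ such that $\mathcal{Q}+Q+K$ is a martingale on $[0,T]$); a hedging cash flow $\mathcal{P}$ (the bad trader's hedge, $\mathcal{P}^{bad}$) with fair value $P=va(\mathcal{P})$ (denoted $P^{bad}$); a semimartingale $q$ with $q_T=0$ (the trader's model price of the asset); a semimartingale $p$ (the trader's price of the hedge); a stopping time $\tau_s\in(0,T]$ (model switch time); an exit stopping time $\theta$; a martingale $h$ with $h=h^\theta$. Set $J^s=\mathbf{1}_{[0,\tau_s)}$, $J^e=\mathbf{1}_{[0,\theta)}$, $$pnl=(\mathcal{Q}+J^sq+(1-J^s)Q)^{\theta}_{(0)}-(\mathcal{P}+J^sp+(1-J^s)P)^{\theta}_{(0)}-h-(1-J^e)\big(J^s_\theta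 q_\theta+(1-J^s_\theta)Q_\theta\big),$$ and $\mathrm{HVA}=-va(pnl)$. Bad-trader assumptions: $\theta\le\tau_s$; $p_t=P_t$ for $t<\tau_s$ (continuous recalibration of the trader's model to the hedging instruments); and $J^s_\theta q_\theta=0$ (the trader calls optimally in his own model before $\tau_s$). *)

theory Defs
  imports "HOL-Probability.Probability"
begin

text \<open>Continuous-time setting on the horizon [0,Tm]. Processes are maps
  real => 'a => real; only times in [0,Tm] are relevant.
  Conditional expectation E_t is real_cond_exp M (F t).\<close>

definition usual_filtration :: "'a measure \<Rightarrow> (real \<Rightarrow> 'a measure) \<Rightarrow> real \<Rightarrow> bool" where
  "usual_filtration M F Tm \<longleftrightarrow>
     filtration (space M) F \<and> (\<forall>t. subalgebra M (F t)) \<and>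
     (\<forall>t\<in>{0..<Tm}. sets (F t) = (\<Inter>u\<in>{t<..Tm}. sets (F u))) \<and>
     (\<forall>A \<in> null_sets M. A \<in> sets (F 0))"

definition stopping_time_in :: "'a measure \<Rightarrow> (real \<Rightarrow> 'a measure) \<Rightarrow> real \<Rightarrow> real \<Rightarrow> ('a \<Rightarrow> real) \<Rightarrow> bool" where
  "stopping_time_in M F a b \<sigma> \<longleftrightarrow> stopping_time F \<sigma> \<and> (\<forall>\<omega>\<in>space M. \<sigma> \<omega> \<in> {a..b})"

definition adapted :: "(real \<Rightarrow> 'a measure) \<Rightarrow> real \<Rightarrow> (real \<Rightarrow> 'a \<Rightarrow> real) \<Rightarrow> bool" where
  "adapted F Tm X \<longleftrightarrow> (\<forall>t\<in>{0..Tm}. X t \<in> borel_measurable (F t))"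

definition cadlag :: "'a measure \<Rightarrow> real \<Rightarrow> (real \<Rightarrow> 'a \<Rightarrow> real) \<Rightarrow> bool" where
  "cadlag M Tm X \<longleftrightarrow> (\<forall>\<omega>\<in>space M.
      (\<forall>t\<in>{0..<Tm}. ((\<lambda>s. X s \<omega>) \<longlongrightarrow> X t \<omega>) (at_right t)) \<and>
      (\<forall>t\<in>{0<..Tm}. \<exists>l. ((\<lambda>s. X s \<omega>) \<longlongrightarrow> l) (at_left t)))"

definition stopped :: "(real \<Rightarrow> 'a \<Rightarrow> real) \<Rightarrow> ('a \<Rightarrow> real) \<Rightarrow> real \<Rightarrow> 'a \<Rightarrow> real" where
  "stopped X \<sigma> = (\<lambda>t \<omega>. X (min t (\<sigma> \<omega>)) \<omega>)"

definition from0 :: "(real \<Rightarrow> 'a \<Rightarrow> real) \<Rightarrow> real \<Rightarrow> 'a \<Rightarrow> real" where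
  "from0 X = (\<lambda>t \<omega>. X t \<omega> - X 0 \<omega>)"

definition va :: "'a measure \<Rightarrow> (real \<Rightarrow> 'a measure) \<Rightarrow> real \<Rightarrow> (real \<Rightarrow> 'a \<Rightarrow> real) \<Rightarrow> real \<Rightarrow> 'a \<Rightarrow> real" where
  "va M F Tm X = (\<lambda>t. real_cond_exp M (F t) (\<lambda>\<omega>. X Tm \<omega> - X t \<omega>))"

text \<open>Fair callable value: V_t is the essential supremum (over stopping times
  with values in [t,Tm]) of E_t[Y_tau - Y_t], stated via its defining
  properties (F_t-measurable a.s. upper bound, a.s. least among such).\<close>
definition callable_value :: "'a measure \<Rightarrow> (real \<Rightarrow> 'a measure) \<Rightarrow> real \<Rightarrow> (real \<Rightarrow> 'a \<Rightarrow> real) \<Rightarrow> (real \<Rightarrow> 'a \<Rightarrow> real) \<Rightarrow> bool" where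
  "callable_value M F Tm Y V \<longleftrightarrow> (\<forall>t\<in>{0..Tm}.
      V t \<in> borel_measurable (F t) \<and>
      (\<forall>\<tau>. stopping_time_in M F t Tm \<tau> \<longrightarrow>
          (AE \<omega> in M. real_cond_exp M (F t) (\<lambda>\<omega>. Y (\<tau> \<omega>) \<omega> - Y t \<omega>) \<omega> \<le> V t \<omega>)) \<and>
      (\<forall>Z \<in> borel_measurable (F t).
          (\<forall>\<tau>. stopping_time_in M F t Tm \<tau> \<longrightarrow>
             (AE \<omega> in M. real_cond_exp M (F t) (\<lambda>\<omega>. Y (\<tau> \<omega>) \<omega> - Y t \<omega>) \<omega> \<le> Z \<omega>))
          \<longrightarrow> (AE \<omega> in M. V t \<omega> \<le> Z \<omega>)))"

definition martingale :: "'a measure \<Rightarrow> (real \<Rightarrow> 'a measure) \<Rightarrow> real \<Rightarrow> (real \<Rightarrow> 'a \<Rightarrow> real) \<Rightarrow> bool" where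
  "martingale M F Tm X \<longleftrightarrow> adapted F Tm X \<and> (\<forall>t\<in>{0..Tm}. integrable M (X t)) \<and>
     (\<forall>s t. 0 \<le> s \<longrightarrow> s \<le> t \<longrightarrow> t \<le> Tm \<longrightarrow>
        (AE \<omega> in M. real_cond_exp M (F s) (X t) \<omega> = X s \<omega>))"

definition local_martingale :: "'a measure \<Rightarrow> (real \<Rightarrow> 'a measure) \<Rightarrow> real \<Rightarrow> (real \<Rightarrow> 'a \<Rightarrow> real) \<Rightarrow> bool" where
  "local_martingale M F Tm X \<longleftrightarrow> adapted F Tm X \<and> cadlag M Tm X \<and>
     (\<exists>\<sigma> :: nat \<Rightarrow> 'a \<Rightarrow> real. (\<forall>n. stopping_time_in M F 0 Tm (\<sigma> n)) \<and>
        (\<forall>n. \<forall>\<omega>\<in>space M. \<sigma> n \<omega> \<le> \<sigma> (Suc n) \<omega>) \<and>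
        (AE \<omega> in M. \<exists>n. \<sigma> n \<omega> = Tm) \<and>
        (\<forall>n. martingale M F Tm (stopped X (\<sigma> n))))"

definition finite_variation_on :: "(real \<Rightarrow> real) \<Rightarrow> real \<Rightarrow> real \<Rightarrow> bool" where
  "finite_variation_on f a b \<longleftrightarrow> (\<exists>B. \<forall>(n::nat) (s::nat \<Rightarrow> real).
      (\<forall>i\<le>n. s i \<in> {a..b}) \<longrightarrow> (\<forall>i<n. s i \<le> s (Suc i)) \<longrightarrow>
      (\<Sum>i<n. \<bar>f (s (Suc i)) - f (s i)\<bar>) \<le> B)"

definition semimartingale :: "'a measure \<Rightarrow> (real \<Rightarrow> 'a measure) \<Rightarrow> real \<Rightarrow> (real \<Rightarrow> 'a \<Rightarrow> real) \<Rightarrow> bool" where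
  "semimartingale M F Tm X \<longleftrightarrow> adapted F Tm X \<and> cadlag M Tm X \<and>
     (\<exists>L A. local_martingale M F Tm L \<and> (\<forall>\<omega>\<in>space M. L 0 \<omega> = 0) \<and>
        adapted F Tm A \<and> cadlag M Tm A \<and> (\<forall>\<omega>\<in>space M. A 0 \<omega> = 0) \<and>
        (\<forall>\<omega>\<in>space M. finite_variation_on (\<lambda>t. A t \<omega>) 0 Tm) \<and>
        (\<forall>t\<in>{0..Tm}. \<forall>\<omega>\<in>space M. X t \<omega> = X 0 \<omega> + L t \<omega> + A t \<omega>))"

definition predictable_sigma :: "'a measure \<Rightarrow> (real \<Rightarrow> 'a measure) \<Rightarrow> real \<Rightarrow> (real \<times> 'a) measure" where
  "predictable_sigma M F Tm = sigma ({0..Tm} \<times> space M)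
     ({{0} \<times> A | A. A \<in> sets (F 0)} \<union>
      {{s<..t} \<times> A | s t A. 0 \<le> s \<and> s < t \<and> t \<le> Tm \<and> A \<in> sets (F s)})"

definition predictable :: "'a measure \<Rightarrow> (real \<Rightarrow> 'a measure) \<Rightarrow> real \<Rightarrow> (real \<Rightarrow> 'a \<Rightarrow> real) \<Rightarrow> bool" where
  "predictable M F Tm X \<longleftrightarrow> (\<lambda>(t,\<omega>). X t \<omega>) \<in> borel_measurable (predictable_sigma M F Tm)"

definition is_drift :: "'a measure \<Rightarrow> (real \<Rightarrow> 'a measure) \<Rightarrow> real \<Rightarrow> (real \<Rightarrow> 'a \<Rightarrow> real) \<Rightarrow> (real \<Rightarrow> 'a \<Rightarrow> real) \<Rightarrow> bool" where
  "is_drift M F Tm Y K \<longleftrightarrow>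
     (\<forall>\<omega>\<in>space M. K 0 \<omega> = 0 \<and> mono_on {0..Tm} (\<lambda>t. K t \<omega>)) \<and>
     (\<forall>t\<in>{0..Tm}. integrable M (K t)) \<and> predictable M F Tm K \<and>
     martingale M F Tm (\<lambda>t \<omega>. Y t \<omega> + K t \<omega>)"

definition ind_before :: "('a \<Rightarrow> real) \<Rightarrow> real \<Rightarrow> 'a \<Rightarrow> real" where
  "ind_before \<sigma> = (\<lambda>t \<omega>. if t < \<sigma> \<omega> then 1 else 0)"

definition pnl :: "(real \<Rightarrow> 'a \<Rightarrow> real) \<Rightarrow> (real \<Rightarrow> 'a \<Rightarrow> real) \<Rightarrow> (real \<Rightarrow> 'a \<Rightarrow> real) \<Rightarrow>
   (real \<Rightarrow> 'a \<Rightarrow> real) \<Rightarrow> (real \<Rightarrow> 'a \<Rightarrow> real) \<Rightarrow> (real \<Rightarrow> 'a \<Rightarrow> real) \<Rightarrow>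
   ('a \<Rightarrow> real) \<Rightarrow> ('a \<Rightarrow> real) \<Rightarrow> (real \<Rightarrow> 'a \<Rightarrow> real) \<Rightarrow> real \<Rightarrow> 'a \<Rightarrow> real" where
  "pnl Qc Qv q Pc Pv p \<tau>s \<theta> h = (\<lambda>t \<omega>.
     from0 (stopped (\<lambda>s \<omega>. Qc s \<omega> + ind_before \<tau>s s \<omega> * q s \<omega> + (1 - ind_before \<tau>s s \<omega>) * Qv s \<omega>) \<theta>) t \<omega>
   - from0 (stopped (\<lambda>s \<omega>. Pc s \<omega> + ind_before \<tau>s s \<omega> * p s \<omega> + (1 - ind_before \<tau>s s \<omega>) * Pv s \<omega>) \<theta>) t \<omega>
   - h t \<omega>
   - (1 - ind_before \<theta> t \<omega>) * (ind_before \<tau>s (\<theta> \<omega>) \<omega> * q (\<theta> \<omega>) \<omega>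
                              + (1 - ind_before \<tau>s (\<theta> \<omega>) \<omega>) * Qv (\<theta> \<omega>) \<omega>))"

end

theory Submission
  imports Defs
begin

text \<open>Part (i) is pathwise: before the switch the recalibrated hedge price \<open>p\<close> is the fair
  value \<open>Pv\<close>, and the optimal call kills \<open>J\<^sup>s\<^sub>\<theta> q\<^sub>\<theta>\<close>. For (ii), take \<open>E\<^sub>t\<close> of
  \<open>pnl\<^sub>T - pnl\<^sub>t\<close> term by term: \<open>h\<close> and the hedge \<open>Pc + Pv\<close> (a martingale closed by
  \<open>Pc\<^sub>T\<close>, as \<open>Pv = va(Pc)\<close>) have conditionally centred increments up to \<open>\<theta>\<close>, and since
  \<open>Qc + Qv + K\<close> is a martingale, \<open>E\<^sub>t[(Qc + Qv)\<^sub>\<theta>] = (Qc + Qv)\<^sub>t\<^sub>\<and>\<^sub>\<theta> - va(K\<^sup>\<theta>)\<^sub>t\<close>.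
  All of this is optional stopping at the bounded stopping time \<open>\<theta>\<close> for right-continuous
  martingales closed by a terminal variable \<open>Z\<close>. It is proved by approximating \<open>\<theta>\<close> from above
  by stopping times with values in a dyadic grid, for which it is a finite sum, and passing to the
  limit along right-continuous paths; the approximants are dominated by \<open>Z\<close> in the sense of
  conditional Jensen, which gives the uniform integrability needed for the limit. Part (iii) is
  (ii) at \<open>t = 0\<close>, and (iv) combines (i) and (ii).\<close>

subsection \<open>Right-continuous paths and the dyadic grid\<close>

definition right_continuous_paths :: "'a measure \<Rightarrow> real \<Rightarrow> (real \<Rightarrow> 'a \<Rightarrow> real) \<Rightarrow> bool" where
  "right_continuous_paths M Tm X \<longleftrightarrow>
     (\<forall>\<omega>\<in>space M. \<forall>t\<in>{0..<Tm}. ((\<lambda>s. X s \<omega>) \<longlongrightarrow> X t \<omega>) (at_right t))"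

lemma cadlag_imp_right_continuous_paths: "cadlag M Tm X \<Longrightarrow> right_continuous_paths M Tm X"
  unfolding cadlag_def right_continuous_paths_def by blast

lemma right_continuous_paths_add:
  "right_continuous_paths M Tm X \<Longrightarrow> right_continuous_paths M Tm Y \<Longrightarrow>
    right_continuous_paths M Tm (\<lambda>t \<omega>. X t \<omega> + Y t \<omega>)"
  unfolding right_continuous_paths_def by (intro ballI tendsto_add) auto

lemma right_continuous_paths_ind_before: "right_continuous_paths M Tm (ind_before \<sigma>)"
  unfolding right_continuous_paths_def
proof (intro ballI tendsto_eventually)
  fix \<omega> t
  show "eventually (\<lambda>s. ind_before \<sigma> s \<omega> = ind_before \<sigma> t \<omega>) (at_right t)"
    unfolding eventually_at_right_field ind_before_def
  proof (cases "t < \<sigma> \<omega>")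
    case True
    then show "\<exists>b>t. \<forall>s>t. s < b \<longrightarrow> (if s < \<sigma> \<omega> then 1 else 0) = (if t < \<sigma> \<omega> then 1 else (0::real))"
      by (intro exI[of _ "\<sigma> \<omega>"]) auto
  qed (auto intro: exI[of _ "t + 1"])
qed

lemma adapted_ind_before: "stopping_time F \<sigma> \<Longrightarrow> adapted F Tm (ind_before \<sigma>)"
  unfolding adapted_def ind_before_def
proof
  fix t
  assume "stopping_time F \<sigma>"
  then have [measurable]: "Measurable.pred (F t) (\<lambda>\<omega>. t < \<sigma> \<omega>)" by (rule stopping_timeD2)
  show "(\<lambda>\<omega>. if t < \<sigma> \<omega> then 1 else 0 :: real) \<in> borel_measurable (F t)" by measurable
qed

lemma abs_ind_before_le: "\<bar>ind_before \<sigma> s \<omega>\<bar> \<le> 1" "\<bar>1 - ind_before \<sigma> s \<omega>\<bar> \<le> 1"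
  by (auto simp: ind_before_def)

text \<open>The grid point \<open>dyadic_point b n (dyadic_index b n x)\<close> is the smallest point of
  \<open>{b * k / 2^n}\<close> that is \<open>\<ge> x\<close>.\<close>

definition dyadic_index :: "real \<Rightarrow> nat \<Rightarrow> real \<Rightarrow> nat" where
  "dyadic_index b n x = nat \<lceil>x * 2^n / b\<rceil>"

definition dyadic_point :: "real \<Rightarrow> nat \<Rightarrow> nat \<Rightarrow> real" where
  "dyadic_point b n k = b * real k / 2^n"

lemma dyadic_index_le:
  assumes "0 < b" "x \<le> b"
  shows "dyadic_index b n x \<le> 2^n"
proof -
  have "x * 2^n / b \<le> 2^n" using assms by (simp add: field_simps)
  then have "\<lceil>x * 2^n / b\<rceil> \<le> 2^n"
    by (metis ceiling_mono ceiling_of_int of_int_numeral of_int_power)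
  then show ?thesis unfolding dyadic_index_def by (simp add: nat_le_iff)
qed

lemma dyadic_point_in_interval: "0 < b \<Longrightarrow> k \<le> 2^n \<Longrightarrow> dyadic_point b n k \<in> {0..b}"
  unfolding dyadic_point_def by (auto simp: field_simps)

lemma dyadic_index_eq_iff:
  assumes "0 < b" "0 \<le> x"
  shows "dyadic_index b n x = k \<longleftrightarrow> x \<le> dyadic_point b n k \<and> \<not> x \<le> dyadic_point b n k - b / 2^n"
proof -
  have "0 \<le> x * 2^n / b" using assms by simp
  then have "dyadic_index b n x = k \<longleftrightarrow> \<lceil>x * 2^n / b\<rceil> = int k"
    unfolding dyadic_index_def by auto
  also have "\<dots> \<longleftrightarrow> real k - 1 < x * 2^n / b \<and> x * 2^n / b \<le> real k"
    by (simp add: ceiling_eq_iff)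
  also have "\<dots> \<longleftrightarrow> x \<le> dyadic_point b n k \<and> \<not> x \<le> dyadic_point b n k - b / 2^n"
    using assms unfolding dyadic_point_def by (auto simp: field_simps)
  finally show ?thesis .
qed

lemma dyadic_point_index_bounds:
  assumes "0 < b" "0 \<le> x"
  shows "x \<le> dyadic_point b n (dyadic_index b n x)"
    and "dyadic_point b n (dyadic_index b n x) < x + b / 2^n"
  using dyadic_index_eq_iff[OF assms, of n "dyadic_index b n x"] by auto

lemma dyadic_point_index_right_end: "0 < b \<Longrightarrow> dyadic_point b n (dyadic_index b n b) = b"
  unfolding dyadic_index_def dyadic_point_def by simp

lemma tendsto_dyadic_point_right_continuous:
  fixes f :: "real \<Rightarrow> real"
  assumes b: "0 < b" and x: "0 \<le> x" "x \<le> b"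
    and right_cont: "x < b \<Longrightarrow> (f \<longlongrightarrow> f x) (at_right x)"
  shows "(\<lambda>n. f (dyadic_point b n (dyadic_index b n x))) \<longlonglongrightarrow> f x"
proof (cases "x = b")
  case True
  then show ?thesis using dyadic_point_index_right_end[OF b] by simp
next
  case False
  show ?thesis
  proof (rule tendstoI)
    fix e :: real assume "0 < e"
    with right_cont False x obtain d where d: "x < d" "\<And>y. x < y \<Longrightarrow> y < d \<Longrightarrow> dist (f y) (f x) < e"
      by (auto dest!: tendstoD simp: eventually_at_right_field)
    have "(\<lambda>n. b / 2^n) \<longlonglongrightarrow> 0" by (rule LIMSEQ_divide_realpow_zero) simp
    from order_tendstoD(2)[OF this, of "d - x"] d(1)
    have "eventually (\<lambda>n. b / 2^n < d - x) sequentially" by simp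
    then show "eventually (\<lambda>n. dist (f (dyadic_point b n (dyadic_index b n x))) (f x) < e) sequentially"
    proof eventually_elim
      case (elim n)
      with dyadic_point_index_bounds[OF b x(1), of n] d \<open>0 < e\<close>
      show ?case by (cases "dyadic_point b n (dyadic_index b n x) = x") auto
    qed
  qed
qed

lemma indicator_mult_dyadic_sum:
  fixes f :: "nat \<Rightarrow> real"
  assumes "dyadic_index b n (\<theta> \<omega>) \<le> 2^n"
  shows "indicator B \<omega> * f (dyadic_index b n (\<theta> \<omega>)) =
    (\<Sum>k\<le>2^n. indicator (B \<inter> {\<omega>. dyadic_index b n (\<theta> \<omega>) = k}) \<omega> * f k)"
proof -
  have "(\<Sum>k\<le>2^n. indicator (B \<inter> {\<omega>. dyadic_index b n (\<theta> \<omega>) = k}) \<omega> * f k)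
      = (\<Sum>k\<le>2^n. if k = dyadic_index b n (\<theta> \<omega>) then indicator B \<omega> * f k else 0)"
    by (intro sum.cong) (auto simp: indicator_def)
  then show ?thesis using assms by simp
qed


lemma integral_indicator_dyadic_sum:
  fixes g :: "nat \<Rightarrow> 'a \<Rightarrow> real"
  assumes b: "0 < b" and \<theta>: "\<forall>\<omega>\<in>space M. \<theta> \<omega> \<le> b" and B: "B \<subseteq> space M"
    and C: "\<And>k. k \<le> 2^n \<Longrightarrow> B \<inter> {\<omega>. dyadic_index b n (\<theta> \<omega>) = k} \<in> sets M"
    and g: "\<And>k. k \<le> 2^n \<Longrightarrow> integrable M (g k)"
  shows "integrable M (\<lambda>\<omega>. indicator B \<omega> * g (dyadic_index b n (\<theta> \<omega>)) \<omega>)"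
    and "(\<integral>\<omega>. indicator B \<omega> * g (dyadic_index b n (\<theta> \<omega>)) \<omega> \<partial>M)
      = (\<Sum>k\<le>2^n. \<integral>\<omega>. indicator (B \<inter> {\<omega>. dyadic_index b n (\<theta> \<omega>) = k}) \<omega> * g k \<omega> \<partial>M)"
proof -
  let ?C = "\<lambda>k. B \<inter> {\<omega>. dyadic_index b n (\<theta> \<omega>) = k}"
  have sum_eq: "indicator B \<omega> * g (dyadic_index b n (\<theta> \<omega>)) \<omega> = (\<Sum>k\<le>2^n. indicator (?C k) \<omega> * g k \<omega>)"
    if "\<omega> \<in> space M" for \<omega>
    using indicator_mult_dyadic_sum[of b n \<theta> \<omega> B "\<lambda>k. g k \<omega>"] dyadic_index_le[OF b] \<theta> that by simp
  have int_C: "integrable M (\<lambda>\<omega>. indicator (?C k) \<omega> * g k \<omega>)" if "k \<in> {..2^n}" for k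
    using integrable_real_mult_indicator[OF C g] that by (simp add: mult.commute)
  have "integrable M (\<lambda>\<omega>. \<Sum>k\<le>2^n. indicator (?C k) \<omega> * g k \<omega>)"
    using int_C by (intro Bochner_Integration.integrable_sum) auto
  moreover have "integrable M (\<lambda>\<omega>. indicator B \<omega> * g (dyadic_index b n (\<theta> \<omega>)) \<omega>)
      \<longleftrightarrow> integrable M (\<lambda>\<omega>. \<Sum>k\<le>2^n. indicator (?C k) \<omega> * g k \<omega>)"
    by (rule Bochner_Integration.integrable_cong[OF refl sum_eq])
  ultimately show "integrable M (\<lambda>\<omega>. indicator B \<omega> * g (dyadic_index b n (\<theta> \<omega>)) \<omega>)"
    by simp
  show "(\<integral>\<omega>. indicator B \<omega> * g (dyadic_index b n (\<theta> \<omega>)) \<omega> \<partial>M) = (\<Sum>k\<le>2^n. \<integral>\<omega>. indicator (?C k) \<omega> * g k \<omega> \<partial>M)"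
  proof -
    have "(\<integral>\<omega>. indicator B \<omega> * g (dyadic_index b n (\<theta> \<omega>)) \<omega> \<partial>M)
        = (\<integral>\<omega>. (\<Sum>k\<le>2^n. indicator (?C k) \<omega> * g k \<omega>) \<partial>M)"
      by (rule Bochner_Integration.integral_cong[OF refl sum_eq])
    also have "\<dots> = (\<Sum>k\<le>2^n. \<integral>\<omega>. indicator (?C k) \<omega> * g k \<omega> \<partial>M)"
      by (rule Bochner_Integration.integral_sum) (rule int_C)
    finally show ?thesis .
  qed
qed

subsection \<open>A Vitali-type convergence lemma\<close>

lemma integrable_indicator_mult:
  "A \<in> sets M \<Longrightarrow> integrable M f \<Longrightarrow> integrable M (\<lambda>x. indicator A x * f x :: real)"
  using integrable_real_mult_indicator[of A M f] by (simp add: mult.commute)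

lemma integrable_bounded_mult:
  fixes f u :: "'a \<Rightarrow> real"
  assumes "integrable M f" "u \<in> borel_measurable M" "\<And>x. \<bar>u x\<bar> \<le> 1"
  shows "integrable M (\<lambda>x. u x * f x)"
proof (rule Bochner_Integration.integrable_bound[OF assms(1)])
  show "(\<lambda>x. u x * f x) \<in> borel_measurable M" using assms by (auto simp: borel_measurable_integrable)
  show "AE x in M. norm (u x * f x) \<le> norm (f x)"
    using assms(3) by (intro AE_I2) (simp add: abs_mult mult_left_le_one_le)
qed

definition clip :: "real \<Rightarrow> real \<Rightarrow> real" where
  "clip c x = max (-c) (min c x)"

lemma abs_clip_le: "0 \<le> c \<Longrightarrow> \<bar>clip c x\<bar> \<le> c"
  unfolding clip_def by auto

lemma abs_diff_clip_le: "0 \<le> c \<Longrightarrow> \<bar>x - clip c x\<bar> \<le> (if c < \<bar>x\<bar> then \<bar>x\<bar> else 0)"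
  unfolding clip_def by auto

lemma borel_measurable_clip[measurable]: "clip c \<in> borel_measurable borel"
  unfolding clip_def by measurable

lemma isCont_clip: "isCont (clip c) x"
  unfolding clip_def by (intro continuous_intros)

lemma eventually_real_Suc_gt: "eventually (\<lambda>m. x < real (Suc m)) sequentially"
proof -
  obtain N where "x < real N" using reals_Archimedean2 by blast
  then show ?thesis unfolding eventually_sequentially by (intro exI[of _ N]) auto
qed

lemma tendsto_integral_zero_dominated:
  fixes g :: "nat \<Rightarrow> 'a \<Rightarrow> real"
  assumes "integrable M w" "\<And>m. g m \<in> borel_measurable M"
    and "\<And>m x. x \<in> space M \<Longrightarrow> \<bar>g m x\<bar> \<le> w x"
    and "\<And>x. x \<in> space M \<Longrightarrow> eventually (\<lambda>m. g m x = 0) sequentially"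
  shows "(\<lambda>m. \<integral>x. g m x \<partial>M) \<longlonglongrightarrow> 0"
proof -
  have "(\<lambda>m. \<integral>x. g m x \<partial>M) \<longlonglongrightarrow> (\<integral>x. 0 \<partial>M)"
    by (rule integral_dominated_convergence[where w=w])
       (use assms in \<open>auto intro!: AE_I2 tendsto_eventually\<close>)
  then show ?thesis by simp
qed

lemma tendsto_integral_tail_zero:
  fixes Z :: "'a \<Rightarrow> real"
  assumes Z: "integrable M Z"
  shows "(\<lambda>m. \<integral>\<omega>. indicator {\<omega>\<in>space M. real (Suc m) < \<bar>Z \<omega>\<bar>} \<omega> * \<bar>Z \<omega>\<bar> \<partial>M) \<longlonglongrightarrow> 0"
proof (rule tendsto_integral_zero_dominated[where w="\<lambda>\<omega>. \<bar>Z \<omega>\<bar>"])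
  fix \<omega> show "eventually (\<lambda>m. indicator {\<omega>\<in>space M. real (Suc m) < \<bar>Z \<omega>\<bar>} \<omega> * \<bar>Z \<omega>\<bar> = 0) sequentially"
    using eventually_real_Suc_gt[of "\<bar>Z \<omega>\<bar>"] by eventually_elim (auto simp: indicator_def)
qed (use Z in \<open>auto simp: indicator_def\<close>)

lemma tendsto_integral_clip_error_zero:
  fixes W :: "'a \<Rightarrow> real"
  assumes W: "integrable M W"
  shows "(\<lambda>m. \<integral>\<omega>. \<bar>W \<omega> - clip (real (Suc m)) (W \<omega>)\<bar> \<partial>M) \<longlonglongrightarrow> 0"
proof (rule tendsto_integral_zero_dominated[where w="\<lambda>\<omega>. \<bar>W \<omega>\<bar>"])
  fix \<omega> show "eventually (\<lambda>m. \<bar>W \<omega> - clip (real (Suc m)) (W \<omega>)\<bar> = 0) sequentially"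
    using eventually_real_Suc_gt[of "\<bar>W \<omega>\<bar>"] by eventually_elim (auto simp: clip_def)
next
  fix m \<omega>
  show "\<bar>\<bar>W \<omega> - clip (real (Suc m)) (W \<omega>)\<bar>\<bar> \<le> \<bar>W \<omega>\<bar>"
    using abs_diff_clip_le[of "real (Suc m)" "W \<omega>"] by (simp split: if_splits)
qed (use W in auto)

lemma integral_abs_le_integral:
  fixes f g :: "'a \<Rightarrow> real"
  assumes "integrable M f" "integrable M g" "\<And>x. x \<in> space M \<Longrightarrow> \<bar>f x\<bar> \<le> g x"
  shows "\<bar>\<integral>x. f x \<partial>M\<bar> \<le> (\<integral>x. g x \<partial>M)"
  by (rule order_trans[OF integral_abs_bound integral_mono]) (use assms in auto)

lemma (in finite_measure) integral_indicator_abs_le_tail: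
  fixes Z :: "'a \<Rightarrow> real"
  assumes Z: "integrable M Z" and S: "S \<in> sets M" and d: "0 \<le> d"
  shows "(\<integral>x. indicator S x * \<bar>Z x\<bar> \<partial>M)
    \<le> (\<integral>x. indicator {x\<in>space M. d < \<bar>Z x\<bar>} x * \<bar>Z x\<bar> \<partial>M) + d * measure M S"
proof -
  have [measurable]: "Z \<in> borel_measurable M" using Z by simp
  have tail_int: "integrable M (\<lambda>x. indicator {x\<in>space M. d < \<bar>Z x\<bar>} x * \<bar>Z x\<bar>)"
    using integrable_real_mult_indicator[of _ M "\<lambda>x. \<bar>Z x\<bar>"] Z by (simp add: mult.commute)
  have S_int: "integrable M (\<lambda>x. d * indicator S x)"
    using S by (intro integrable_mult_right integrable_real_indicator) (auto simp: less_top[symmetric])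
  have "(\<integral>x. indicator S x * \<bar>Z x\<bar> \<partial>M)
      \<le> (\<integral>x. indicator {x\<in>space M. d < \<bar>Z x\<bar>} x * \<bar>Z x\<bar> + d * indicator S x \<partial>M)"
    by (rule integral_mono') (use tail_int S_int d in \<open>auto simp: indicator_def\<close>)
  also have "\<dots> = (\<integral>x. indicator {x\<in>space M. d < \<bar>Z x\<bar>} x * \<bar>Z x\<bar> \<partial>M) + d * measure M S"
    using tail_int S_int S by (simp add: Int_absorb2 sets.sets_into_space)
  finally show ?thesis .
qed

lemma (in prob_space) integral_indicator_clip_approx:
  fixes V Z :: "'a \<Rightarrow> real"
  assumes Z: "integrable M Z" and V: "integrable M V" and B: "B \<in> sets M"
    and eq: "(\<integral>\<omega>. indicator B \<omega> * V \<omega> \<partial>M) = (\<integral>\<omega>. indicator B \<omega> * Z \<omega> \<partial>M)"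
    and tail: "(\<integral>\<omega>. indicator {\<omega>\<in>space M. c < \<bar>V \<omega>\<bar>} \<omega> * \<bar>V \<omega>\<bar> \<partial>M)
      \<le> (\<integral>\<omega>. indicator {\<omega>\<in>space M. c < \<bar>V \<omega>\<bar>} \<omega> * \<bar>Z \<omega>\<bar> \<partial>M)"
    and L1: "(\<integral>\<omega>. \<bar>V \<omega>\<bar> \<partial>M) \<le> (\<integral>\<omega>. \<bar>Z \<omega>\<bar> \<partial>M)"
    and c: "0 < c" and d: "0 < d"
  shows "\<bar>(\<integral>\<omega>. indicator B \<omega> * Z \<omega> \<partial>M) - (\<integral>\<omega>. indicator B \<omega> * clip c (V \<omega>) \<partial>M)\<bar>
    \<le> (\<integral>\<omega>. indicator {\<omega>\<in>space M. d < \<bar>Z \<omega>\<bar>} \<omega> * \<bar>Z \<omega>\<bar> \<partial>M) + d * ((\<integral>\<omega>. \<bar>Z \<omega>\<bar> \<partial>M) / c)"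
proof -
  define S where "S = {\<omega>\<in>space M. c < \<bar>V \<omega>\<bar>}"
  have [measurable]: "V \<in> borel_measurable M" "B \<in> sets M" "S \<in> sets M"
    using V B unfolding S_def by auto
  have clip_int: "integrable M (\<lambda>\<omega>. indicator B \<omega> * clip c (V \<omega>))"
    by (rule integrable_const_bound[where B=c]) (use abs_clip_le c in \<open>auto simp: indicator_def\<close>)
  have "\<bar>(\<integral>\<omega>. indicator B \<omega> * Z \<omega> \<partial>M) - (\<integral>\<omega>. indicator B \<omega> * clip c (V \<omega>) \<partial>M)\<bar>
      = \<bar>\<integral>\<omega>. indicator B \<omega> * V \<omega> - indicator B \<omega> * clip c (V \<omega>) \<partial>M\<bar>"
    unfolding eq[symmetric] using integrable_indicator_mult[OF B V] clip_int by simp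
  also have "\<dots> \<le> (\<integral>\<omega>. indicator S \<omega> * \<bar>V \<omega>\<bar> \<partial>M)"
  proof (rule integral_abs_le_integral)
    show "\<bar>indicator B \<omega> * V \<omega> - indicator B \<omega> * clip c (V \<omega>)\<bar> \<le> indicator S \<omega> * \<bar>V \<omega>\<bar>"
      if "\<omega> \<in> space M" for \<omega>
      using that abs_diff_clip_le[of c "V \<omega>"] c unfolding S_def
      by (auto simp: indicator_def split: if_splits)
  qed (use integrable_indicator_mult[OF _ V] integrable_indicator_mult[OF _ integrable_abs[OF V]] clip_int
       in auto)
  also have "\<dots> \<le> (\<integral>\<omega>. indicator S \<omega> * \<bar>Z \<omega>\<bar> \<partial>M)" unfolding S_def by (rule tail)
  also have "\<dots> \<le> (\<integral>\<omega>. indicator {\<omega>\<in>space M. d < \<bar>Z \<omega>\<bar>} \<omega> * \<bar>Z \<omega>\<bar> \<partial>M) + d * measure M S"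
    using integral_indicator_abs_le_tail[OF Z, of S d] d by simp
  also have "measure M S \<le> (\<integral>\<omega>. \<bar>Z \<omega>\<bar> \<partial>M) / c"
  proof -
    have "measure M S \<le> measure M {\<omega>\<in>space M. c \<le> \<bar>V \<omega>\<bar>}"
      by (rule finite_measure_mono) (auto simp: S_def)
    also have "\<dots> \<le> (\<integral>\<omega>. \<bar>V \<omega>\<bar> \<partial>M) / c"
      by (rule integral_Markov_inequality_measure[where A="space M"]) (use V c in auto)
    finally show ?thesis using divide_right_mono[OF L1, of c] c by linarith
  qed
  finally show ?thesis using d by (simp add: mult_left_mono)
qed

lemma (in finite_measure) integral_indicator_clip_error:
  fixes W :: "'a \<Rightarrow> real"
  assumes W: "integrable M W" and B: "B \<in> sets M" and c: "0 \<le> c"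
  shows "\<bar>(\<integral>\<omega>. indicator B \<omega> * clip c (W \<omega>) \<partial>M) - (\<integral>\<omega>. indicator B \<omega> * W \<omega> \<partial>M)\<bar>
    \<le> (\<integral>\<omega>. \<bar>W \<omega> - clip c (W \<omega>)\<bar> \<partial>M)"
proof -
  have [measurable]: "W \<in> borel_measurable M" "B \<in> sets M" using W B by auto
  have clip_int: "integrable M (\<lambda>\<omega>. indicator B \<omega> * clip c (W \<omega>))" "integrable M (\<lambda>\<omega>. clip c (W \<omega>))"
    by (rule integrable_const_bound[where B=c]; use abs_clip_le c in \<open>auto simp: indicator_def\<close>)+
  have "\<bar>(\<integral>\<omega>. indicator B \<omega> * clip c (W \<omega>) \<partial>M) - (\<integral>\<omega>. indicator B \<omega> * W \<omega> \<partial>M)\<bar>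
      = \<bar>\<integral>\<omega>. indicator B \<omega> * clip c (W \<omega>) - indicator B \<omega> * W \<omega> \<partial>M\<bar>"
    using integrable_indicator_mult[OF B W] clip_int by simp
  also have "\<dots> \<le> (\<integral>\<omega>. \<bar>W \<omega> - clip c (W \<omega>)\<bar> \<partial>M)"
    by (rule integral_abs_le_integral) (use integrable_indicator_mult[OF B W] clip_int W in
        \<open>auto simp: indicator_def\<close>)
  finally show ?thesis .
qed

text \<open>The tail hypothesis makes the sequence \<open>Wn\<close> uniformly integrable: truncate at level
  \<open>c\<close>, pass to the limit under the truncation by dominated convergence, and then let \<open>c\<close> and
  the tail level \<open>d\<close> tend to infinity.\<close>

lemma (in prob_space) integral_indicator_eq_of_tail_bound:
  fixes W Z :: "'a \<Rightarrow> real" and Wn :: "nat \<Rightarrow> 'a \<Rightarrow> real"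
  assumes Z: "integrable M Z" and W: "integrable M W" and Wn: "\<And>n. integrable M (Wn n)"
    and lim: "\<And>\<omega>. \<omega> \<in> space M \<Longrightarrow> (\<lambda>n. Wn n \<omega>) \<longlonglongrightarrow> W \<omega>"
    and B: "B \<in> sets M"
    and eq: "\<And>n. (\<integral>\<omega>. indicator B \<omega> * Wn n \<omega> \<partial>M) = (\<integral>\<omega>. indicator B \<omega> * Z \<omega> \<partial>M)"
    and tail: "\<And>n c. 0 < c \<Longrightarrow>
      (\<integral>\<omega>. indicator {\<omega>\<in>space M. c < \<bar>Wn n \<omega>\<bar>} \<omega> * \<bar>Wn n \<omega>\<bar> \<partial>M)
        \<le> (\<integral>\<omega>. indicator {\<omega>\<in>space M. c < \<bar>Wn n \<omega>\<bar>} \<omega> * \<bar>Z \<omega>\<bar> \<partial>M)"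
    and L1: "\<And>n. (\<integral>\<omega>. \<bar>Wn n \<omega>\<bar> \<partial>M) \<le> (\<integral>\<omega>. \<bar>Z \<omega>\<bar> \<partial>M)"
  shows "(\<integral>\<omega>. indicator B \<omega> * W \<omega> \<partial>M) = (\<integral>\<omega>. indicator B \<omega> * Z \<omega> \<partial>M)"
proof -
  have [measurable]: "W \<in> borel_measurable M" "Wn n \<in> borel_measurable M" "B \<in> sets M" for n
    using W Wn B by auto
  define a where "a = (\<integral>\<omega>. indicator B \<omega> * Z \<omega> \<partial>M)"
  define Ztail where "Ztail d = (\<integral>\<omega>. indicator {\<omega>\<in>space M. d < \<bar>Z \<omega>\<bar>} \<omega> * \<bar>Z \<omega>\<bar> \<partial>M)" for d
  define err where "err c = (\<integral>\<omega>. \<bar>W \<omega> - clip c (W \<omega>)\<bar> \<partial>M)" for c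
  have approx: "\<bar>a - (\<integral>\<omega>. indicator B \<omega> * W \<omega> \<partial>M)\<bar> \<le> Ztail d + d * ((\<integral>\<omega>. \<bar>Z \<omega>\<bar> \<partial>M) / c) + err c"
    if c: "0 < c" and d: "0 < d" for c d
  proof -
    have "(\<lambda>n. \<bar>a - (\<integral>\<omega>. indicator B \<omega> * clip c (Wn n \<omega>) \<partial>M)\<bar>)
        \<longlonglongrightarrow> \<bar>a - (\<integral>\<omega>. indicator B \<omega> * clip c (W \<omega>) \<partial>M)\<bar>"
      using lim abs_clip_le[of c] c
      by (intro tendsto_intros integral_dominated_convergence[where w="\<lambda>_. c"] AE_I2
          isCont_tendsto_compose[OF isCont_clip]) (auto simp: indicator_def)
    then have "\<bar>a - (\<integral>\<omega>. indicator B \<omega> * clip c (W \<omega>) \<partial>M)\<bar> \<le> Ztail d + d * ((\<integral>\<omega>. \<bar>Z \<omega>\<bar> \<partial>M) / c)"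
      unfolding a_def Ztail_def
      by (rule LIMSEQ_le_const2) (use integral_indicator_clip_approx[OF Z Wn B eq tail L1 c d] c in auto)
    then show ?thesis
      using integral_indicator_clip_error[OF W B, of c] c unfolding err_def by linarith
  qed
  have Ztail_bound: "\<bar>a - (\<integral>\<omega>. indicator B \<omega> * W \<omega> \<partial>M)\<bar> \<le> Ztail d" if d: "0 < d" for d
  proof (rule LIMSEQ_le_const)
    have "(\<lambda>m. Ztail d + d * ((\<integral>\<omega>. \<bar>Z \<omega>\<bar> \<partial>M) / real (Suc m)) + err (real (Suc m)))
        \<longlonglongrightarrow> Ztail d + d * 0 + 0"
      unfolding err_def
      by (intro tendsto_add tendsto_const tendsto_mult LIMSEQ_Suc[OF lim_const_over_n]
          tendsto_integral_clip_error_zero W)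
    then show "(\<lambda>m. Ztail d + d * ((\<integral>\<omega>. \<bar>Z \<omega>\<bar> \<partial>M) / real (Suc m)) + err (real (Suc m))) \<longlonglongrightarrow> Ztail d"
      by simp
  qed (use approx[OF _ d] in auto)
  have "(\<lambda>m. Ztail (real (Suc m))) \<longlonglongrightarrow> 0"
    unfolding Ztail_def by (rule tendsto_integral_tail_zero[OF Z])
  then have "\<bar>a - (\<integral>\<omega>. indicator B \<omega> * W \<omega> \<partial>M)\<bar> \<le> 0"
    by (rule LIMSEQ_le_const) (use Ztail_bound in auto)
  then show ?thesis unfolding a_def by simp
qed

subsection \<open>Calculus of conditional expectations\<close>

definition has_real_cond_exp :: "'a measure \<Rightarrow> 'a measure \<Rightarrow> ('a \<Rightarrow> real) \<Rightarrow> ('a \<Rightarrow> real) \<Rightarrow> bool" where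
  "has_real_cond_exp M G f g \<longleftrightarrow> integrable M f \<and> (AE x in M. real_cond_exp M G f x = g x)"

context sigma_finite_subalgebra
begin

lemma has_real_cond_expD: "has_real_cond_exp M F f g \<Longrightarrow> AE x in M. real_cond_exp M F f x = g x"
  unfolding has_real_cond_exp_def by simp

lemma has_real_cond_exp_real_cond_exp: "integrable M f \<Longrightarrow> has_real_cond_exp M F f (real_cond_exp M F f)"
  unfolding has_real_cond_exp_def by simp

lemma has_real_cond_exp_measurable:
  "integrable M f \<Longrightarrow> f \<in> borel_measurable F \<Longrightarrow> has_real_cond_exp M F f f"
  unfolding has_real_cond_exp_def by simp

lemma has_real_cond_exp_add:
  "has_real_cond_exp M F f g \<Longrightarrow> has_real_cond_exp M F f' g' \<Longrightarrow>
    has_real_cond_exp M F (\<lambda>x. f x + f' x) (\<lambda>x. g x + g' x)"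
  unfolding has_real_cond_exp_def using real_cond_exp_add[of f f'] by auto

lemma has_real_cond_exp_diff:
  assumes "has_real_cond_exp M F f g" "has_real_cond_exp M F f' g'"
  shows "has_real_cond_exp M F (\<lambda>x. f x - f' x) (\<lambda>x. g x - g' x)"
proof -
  have "integrable M f" "integrable M f'" using assms by (auto simp: has_real_cond_exp_def)
  then have "AE x in M. real_cond_exp M F (\<lambda>x. f x - f' x) x = real_cond_exp M F f x - real_cond_exp M F f' x"
    by (rule real_cond_exp_diff)
  with assms[THEN has_real_cond_expD] have "AE x in M. real_cond_exp M F (\<lambda>x. f x - f' x) x = g x - g' x"
    by eventually_elim simp
  with \<open>integrable M f\<close> \<open>integrable M f'\<close> show ?thesis by (simp add: has_real_cond_exp_def)
qed

lemma has_real_cond_exp_mult: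
  "has_real_cond_exp M F f g \<Longrightarrow> u \<in> borel_measurable F \<Longrightarrow> integrable M (\<lambda>x. u x * f x) \<Longrightarrow>
    has_real_cond_exp M F (\<lambda>x. u x * f x) (\<lambda>x. u x * g x)"
  unfolding has_real_cond_exp_def using real_cond_exp_mult[of u f]
  by (auto simp: borel_measurable_integrable)

lemma has_real_cond_exp_cong:
  assumes "has_real_cond_exp M F f g"
    and "\<And>x. x \<in> space M \<Longrightarrow> f' x = f x" "\<And>x. x \<in> space M \<Longrightarrow> g' x = g x"
  shows "has_real_cond_exp M F f' g'"
proof -
  have f: "integrable M f" using assms(1) by (simp add: has_real_cond_exp_def)
  moreover have "integrable M f' \<longleftrightarrow> integrable M f"
    by (rule Bochner_Integration.integrable_cong) (use assms(2) in simp_all)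
  ultimately have f': "integrable M f'" by simp
  then have "AE x in M. real_cond_exp M F f' x = real_cond_exp M F f x"
    using f assms(2) by (intro real_cond_exp_cong) auto
  with has_real_cond_expD[OF assms(1)] AE_space have "AE x in M. real_cond_exp M F f' x = g' x"
    by eventually_elim (simp add: assms(3))
  with f' show ?thesis by (simp add: has_real_cond_exp_def)
qed

end

subsection \<open>Optional stopping for right-continuous closed martingales\<close>

locale filtered_prob_space = prob_space M + filtration "space M" F
  for M :: "'a measure" and F :: "real \<Rightarrow> 'a measure" +
  assumes subalgebra_F: "subalgebra M (F t)"
begin

declare space_F[simp]

lemma sigma_finite_subalgebra_F: "sigma_finite_subalgebra M (F t)"
  by (rule finite_measure_subalgebra_is_sigma_finite, unfold_locales) (rule subalgebra_F)

lemma sets_F_subset: "A \<in> sets (F t) \<Longrightarrow> A \<in> sets M"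
  using subalgebra_F by (auto simp: subalgebra_def)

lemma measurable_F_M: "f \<in> borel_measurable (F t) \<Longrightarrow> f \<in> borel_measurable M"
  using measurable_from_subalg[OF subalgebra_F] .

lemma measurable_F_mono: "s \<le> t \<Longrightarrow> f \<in> borel_measurable (F s) \<Longrightarrow> f \<in> borel_measurable (F t)"
  by (rule measurable_from_subalg[of "F t" "F s"]) (auto simp: subalgebra_def sets_F_mono)

lemma pre_sigma_subset_space: "stopping_time F \<theta> \<Longrightarrow> B \<in> sets (pre_sigma \<theta>) \<Longrightarrow> B \<subseteq> space M"
  using sets.sets_into_space[of B "pre_sigma \<theta>"] by (simp add: space_pre_sigma)

lemma Int_after_in_F:
  assumes "stopping_time F \<theta>" "A \<in> sets (F t)"
  shows "A \<inter> {\<omega>\<in>space M. t < \<theta> \<omega>} \<in> sets (F t)"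
proof -
  have "{\<omega>\<in>space M. t < \<theta> \<omega>} \<in> sets (F t)"
    using stopping_timeD2[OF assms(1), of t] by (simp add: pred_def)
  then show ?thesis using assms(2) by auto
qed

lemma Int_after_in_pre_sigma:
  assumes st: "stopping_time F \<theta>" and A: "A \<in> sets (F t)"
  shows "A \<inter> {\<omega>\<in>space M. t < \<theta> \<omega>} \<in> sets (pre_sigma \<theta>)"
proof (rule sets_pre_sigmaI[OF st])
  fix v
  let ?A = "A \<inter> {\<omega>\<in>space M. t < \<theta> \<omega>}"
  show "{\<omega>\<in>?A. \<theta> \<omega> \<le> v} \<in> sets (F v)"
  proof (cases "v \<le> t")
    case True
    then have "{\<omega>\<in>?A. \<theta> \<omega> \<le> v} = {}" by auto
    then show ?thesis by (metis sets.empty_sets)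
  next
    case False
    then have "?A \<inter> {\<omega>\<in>space M. \<theta> \<omega> \<le> v} \<in> sets (F v)"
      using Int_after_in_F[OF st A] sets_F_mono[of t v] stopping_timeD[OF st, of v]
      by (auto simp: pred_def)
    moreover have "?A \<inter> {\<omega>\<in>space M. \<theta> \<omega> \<le> v} = {\<omega>\<in>?A. \<theta> \<omega> \<le> v}" by auto
    ultimately show ?thesis by simp
  qed
qed

lemma dyadic_level_set_in_F:
  assumes b: "0 < b" and \<theta>: "stopping_time F \<theta>" "\<forall>\<omega>\<in>space M. 0 \<le> \<theta> \<omega>"
    and B: "B \<in> sets (pre_sigma \<theta>)"
  shows "B \<inter> {\<omega>. dyadic_index b n (\<theta> \<omega>) = k} \<in> sets (F (dyadic_point b n k))"
proof -
  let ?t = "dyadic_point b n k"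
  have "B \<inter> {\<omega>. dyadic_index b n (\<theta> \<omega>) = k} = {\<omega>\<in>B. \<theta> \<omega> \<le> ?t} - {\<omega>\<in>B. \<theta> \<omega> \<le> ?t - b / 2^n}"
    using dyadic_index_eq_iff[OF b] \<theta>(2) pre_sigma_subset_space[OF \<theta>(1) B] by blast
  moreover have "{\<omega>\<in>B. \<theta> \<omega> \<le> ?t - b / 2^n} \<in> sets (F ?t)"
    using sets_pre_sigmaD[OF \<theta>(1) B] sets_F_mono[of "?t - b / 2^n" ?t] b by auto
  ultimately show ?thesis using sets_pre_sigmaD[OF \<theta>(1) B, of ?t] by auto
qed

lemma measurable_dyadic_stopped:
  fixes Y :: "real \<Rightarrow> 'a \<Rightarrow> real"
  assumes b: "0 < b" and \<theta>: "stopping_time F \<theta>" "\<forall>\<omega>\<in>space M. \<theta> \<omega> \<in> {0..b}"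
    and Y: "\<And>k. k \<le> 2^n \<Longrightarrow> Y (dyadic_point b n k) \<in> borel_measurable (F (dyadic_point b n k))"
  shows "(\<lambda>\<omega>. Y (dyadic_point b n (dyadic_index b n (\<theta> \<omega>))) \<omega>) \<in> borel_measurable (F b)"
proof -
  let ?C = "\<lambda>k. space M \<inter> {\<omega>. dyadic_index b n (\<theta> \<omega>) = k}"
  have "(\<lambda>\<omega>. \<Sum>k\<le>2^n. indicator (?C k) \<omega> * Y (dyadic_point b n k) \<omega>) \<in> borel_measurable (F b)"
  proof (intro borel_measurable_sum borel_measurable_times)
    fix k :: nat assume "k \<in> {..2^n}"
    then have k: "k \<le> 2^n" and le_b: "dyadic_point b n k \<le> b"
      using dyadic_point_in_interval[OF b] by auto
    have "?C k \<in> sets (F (dyadic_point b n k))"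
      using dyadic_level_set_in_F[OF b \<theta>(1)] \<theta>(2) sets.top[of "pre_sigma \<theta>"]
      by (simp add: space_pre_sigma)
    then show "indicator (?C k) \<in> borel_measurable (F b)"
      using sets_F_mono[OF le_b] by auto
    show "Y (dyadic_point b n k) \<in> borel_measurable (F b)"
      using measurable_F_mono[OF le_b Y[OF k]] .
  qed
  moreover have "Y (dyadic_point b n (dyadic_index b n (\<theta> \<omega>))) \<omega>
      = (\<Sum>k\<le>2^n. indicator (?C k) \<omega> * Y (dyadic_point b n k) \<omega>)" if "\<omega> \<in> space (F b)" for \<omega>
    using that indicator_mult_dyadic_sum[of b n \<theta> \<omega> "space M" "\<lambda>k. Y (dyadic_point b n k) \<omega>"]
      dyadic_index_le[OF b] \<theta>(2) by simp
  ultimately show ?thesis by (rule measurable_cong[THEN iffD2, rotated])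
qed

text \<open>Progressive measurability of right-continuous adapted processes, through the dyadic
  approximation of \<open>min t \<theta>\<close> from the right.\<close>

lemma measurable_stopped_process:
  fixes Y :: "real \<Rightarrow> 'a \<Rightarrow> real"
  assumes Y: "adapted F Tm Y" "right_continuous_paths M Tm Y"
    and \<theta>: "stopping_time_in M F 0 Tm \<theta>" and t: "t \<in> {0..Tm}"
  shows "(\<lambda>\<omega>. Y (min t (\<theta> \<omega>)) \<omega>) \<in> borel_measurable (F t)"
proof (cases "t = 0")
  case True
  have "Y 0 \<in> borel_measurable (F t)" using Y(1) t True by (simp add: adapted_def)
  moreover have "Y (min t (\<theta> \<omega>)) \<omega> = Y 0 \<omega>" if "\<omega> \<in> space (F t)" for \<omega>
    using that \<theta> True by (simp add: stopping_time_in_def min_def)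
  ultimately show ?thesis by (rule measurable_cong[THEN iffD2, rotated])
next
  case False
  then have t0: "0 < t" using t by simp
  define \<rho> where "\<rho> \<omega> = min t (\<theta> \<omega>)" for \<omega>
  have \<rho>: "stopping_time F \<rho>" "\<forall>\<omega>\<in>space M. \<rho> \<omega> \<in> {0..t}"
    using \<theta> t unfolding \<rho>_def stopping_time_in_def by (auto intro: stopping_time_min stopping_time_const)
  show ?thesis unfolding \<rho>_def[symmetric]
  proof (rule borel_measurable_LIMSEQ_real)
    fix \<omega> assume "\<omega> \<in> space (F t)"
    then show "(\<lambda>n. Y (dyadic_point t n (dyadic_index t n (\<rho> \<omega>))) \<omega>) \<longlonglongrightarrow> Y (\<rho> \<omega>) \<omega>"
      using \<rho>(2) t Y(2)
      by (intro tendsto_dyadic_point_right_continuous t0) (auto simp: right_continuous_paths_def)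
  next
    fix n
    show "(\<lambda>\<omega>. Y (dyadic_point t n (dyadic_index t n (\<rho> \<omega>))) \<omega>) \<in> borel_measurable (F t)"
      using dyadic_point_in_interval[OF t0] t Y(1)
      by (intro measurable_dyadic_stopped[OF t0 \<rho>]) (fastforce simp: adapted_def)
  qed
qed

definition closed_martingale :: "real \<Rightarrow> (real \<Rightarrow> 'a \<Rightarrow> real) \<Rightarrow> ('a \<Rightarrow> real) \<Rightarrow> bool" where
  "closed_martingale Tm Y Z \<longleftrightarrow> integrable M Z \<and> (\<forall>t\<in>{0..Tm}.
     Y t \<in> borel_measurable (F t) \<and> integrable M (Y t) \<and>
     (\<forall>A\<in>sets (F t). (\<integral>x. indicator A x * Y t x \<partial>M) = (\<integral>x. indicator A x * Z x \<partial>M)))"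

lemma closed_martingaleD:
  assumes "closed_martingale Tm Y Z" "t \<in> {0..Tm}"
  shows "Y t \<in> borel_measurable (F t)" "integrable M (Y t)" "integrable M Z"
    and "A \<in> sets (F t) \<Longrightarrow> (\<integral>x. indicator A x * Y t x \<partial>M) = (\<integral>x. indicator A x * Z x \<partial>M)"
  using assms unfolding closed_martingale_def by auto

lemma closed_martingale_imp_adapted: "closed_martingale Tm Y Z \<Longrightarrow> adapted F Tm Y"
  unfolding closed_martingale_def adapted_def by blast

lemma martingale_imp_closed_martingale:
  assumes mart: "martingale M F Tm Y" and Tm: "0 \<le> Tm"
  shows "closed_martingale Tm Y (Y Tm)"
  unfolding closed_martingale_def
proof (intro conjI ballI)
  show "integrable M (Y Tm)" using mart Tm by (simp add: martingale_def)
  fix t assume t: "t \<in> {0..Tm}"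
  show "Y t \<in> borel_measurable (F t)" "integrable M (Y t)"
    using mart t by (auto simp: martingale_def adapted_def)
  fix A assume A: "A \<in> sets (F t)"
  interpret sigma_finite_subalgebra M "F t" by (rule sigma_finite_subalgebra_F)
  have [measurable]: "A \<in> sets M" "Y t \<in> borel_measurable M" "Y Tm \<in> borel_measurable M"
    using mart t Tm sets_F_subset[OF A] by (auto simp: martingale_def)
  have "(\<integral>x. indicator A x * Y Tm x \<partial>M) = (\<integral>x. indicator A x * real_cond_exp M (F t) (Y Tm) x \<partial>M)"
    using integrable_real_mult_indicator[of A M "Y Tm"] mart Tm A
    by (intro real_cond_exp_intg(2)[symmetric]) (auto simp: martingale_def mult.commute)
  also have "\<dots> = (\<integral>x. indicator A x * Y t x \<partial>M)"
  proof (rule integral_cong_AE)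
    have "AE x in M. real_cond_exp M (F t) (Y Tm) x = Y t x" using mart t by (auto simp: martingale_def)
    then show "AE x in M. indicator A x * real_cond_exp M (F t) (Y Tm) x = indicator A x * Y t x"
      by eventually_elim simp
  qed simp_all
  finally show "(\<integral>x. indicator A x * Y t x \<partial>M) = (\<integral>x. indicator A x * Y Tm x \<partial>M)" ..
qed

lemma closed_martingale_integral_abs_le:
  assumes mg: "closed_martingale Tm Y Z" and t: "t \<in> {0..Tm}" and A: "A \<in> sets (F t)"
  shows "(\<integral>x. indicator A x * \<bar>Y t x\<bar> \<partial>M) \<le> (\<integral>x. indicator A x * \<bar>Z x\<bar> \<partial>M)"
proof -
  note Y = closed_martingaleD[OF mg t]
  have [measurable]: "Y t \<in> borel_measurable (F t)" by (rule Y(1))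
  define Ap where "Ap = A \<inter> {x\<in>space M. 0 \<le> Y t x}"
  define An where "An = A \<inter> {x\<in>space M. Y t x < 0}"
  have "{x\<in>space (F t). 0 \<le> Y t x} \<in> sets (F t)" "{x\<in>space (F t). Y t x < 0} \<in> sets (F t)"
    by measurable
  then have F: "Ap \<in> sets (F t)" "An \<in> sets (F t)" using A unfolding Ap_def An_def by auto
  have sets: "Ap \<in> sets M" "An \<in> sets M" "A \<in> sets M"
    using sets_F_subset F A by auto
  have "(\<integral>x. indicator A x * \<bar>Y t x\<bar> \<partial>M) = (\<integral>x. indicator Ap x * Y t x - indicator An x * Y t x \<partial>M)"
    using sets.sets_into_space[OF sets(3)] unfolding Ap_def An_def
    by (intro Bochner_Integration.integral_cong) (auto simp: indicator_def)
  also have "\<dots> = (\<integral>x. indicator Ap x * Y t x \<partial>M) - (\<integral>x. indicator An x * Y t x \<partial>M)"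
    using integrable_indicator_mult[OF sets(1) Y(2)] integrable_indicator_mult[OF sets(2) Y(2)]
    by (rule Bochner_Integration.integral_diff)
  also have "\<dots> = (\<integral>x. indicator Ap x * Z x \<partial>M) - (\<integral>x. indicator An x * Z x \<partial>M)"
    using Y(4)[OF F(1)] Y(4)[OF F(2)] by simp
  also have "\<dots> = (\<integral>x. indicator Ap x * Z x - indicator An x * Z x \<partial>M)"
    using integrable_indicator_mult[OF sets(1) Y(3)] integrable_indicator_mult[OF sets(2) Y(3)]
    by (rule Bochner_Integration.integral_diff[symmetric])
  also have "\<dots> \<le> (\<integral>x. indicator A x * \<bar>Z x\<bar> \<partial>M)"
  proof (rule integral_mono)
    show "integrable M (\<lambda>x. indicator Ap x * Z x - indicator An x * Z x)"
      using integrable_indicator_mult[OF sets(1) Y(3)] integrable_indicator_mult[OF sets(2) Y(3)] by simp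
    show "integrable M (\<lambda>x. indicator A x * \<bar>Z x\<bar>)"
      using integrable_indicator_mult[OF sets(3) integrable_abs[OF Y(3)]] .
    show "indicator Ap x * Z x - indicator An x * Z x \<le> indicator A x * \<bar>Z x\<bar>" for x
      unfolding Ap_def An_def by (auto simp: indicator_def)
  qed
  finally show ?thesis .
qed

lemma closed_martingale_dyadic_stopped:
  assumes mg: "closed_martingale Tm Y Z" and Tm: "0 < Tm" and \<theta>: "\<forall>\<omega>\<in>space M. \<theta> \<omega> \<in> {0..Tm}"
    and B: "B \<subseteq> space M"
    and B_levels: "\<And>k. k \<le> 2^n \<Longrightarrow>
      B \<inter> {\<omega>. dyadic_index Tm n (\<theta> \<omega>) = k} \<in> sets (F (dyadic_point Tm n k))"
  shows "integrable M (\<lambda>\<omega>. indicator B \<omega> * Y (dyadic_point Tm n (dyadic_index Tm n (\<theta> \<omega>))) \<omega>)"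
    and "(\<integral>\<omega>. indicator B \<omega> * Y (dyadic_point Tm n (dyadic_index Tm n (\<theta> \<omega>))) \<omega> \<partial>M)
      = (\<integral>\<omega>. indicator B \<omega> * Z \<omega> \<partial>M)"
    and "(\<integral>\<omega>. indicator B \<omega> * \<bar>Y (dyadic_point Tm n (dyadic_index Tm n (\<theta> \<omega>))) \<omega>\<bar> \<partial>M)
      \<le> (\<integral>\<omega>. indicator B \<omega> * \<bar>Z \<omega>\<bar> \<partial>M)"
proof -
  let ?C = "\<lambda>k. B \<inter> {\<omega>. dyadic_index Tm n (\<theta> \<omega>) = k}"
  have \<theta>_le: "\<forall>\<omega>\<in>space M. \<theta> \<omega> \<le> Tm" using \<theta> by auto
  have grid: "dyadic_point Tm n k \<in> {0..Tm}" if "k \<le> 2^n" for k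
    using dyadic_point_in_interval[OF Tm that] .
  note C = sets_F_subset[OF B_levels]
  note Y = closed_martingaleD[OF mg grid]
  note sum_Y = integral_indicator_dyadic_sum[OF Tm \<theta>_le B C, of "\<lambda>k. Y (dyadic_point Tm n k)"]
  note sum_Z = integral_indicator_dyadic_sum[OF Tm \<theta>_le B C, of "\<lambda>k. Z"]
  note sum_abs_Y = integral_indicator_dyadic_sum[OF Tm \<theta>_le B C, of "\<lambda>k x. \<bar>Y (dyadic_point Tm n k) x\<bar>"]
  note sum_abs_Z = integral_indicator_dyadic_sum[OF Tm \<theta>_le B C, of "\<lambda>k x. \<bar>Z x\<bar>"]
  show "integrable M (\<lambda>\<omega>. indicator B \<omega> * Y (dyadic_point Tm n (dyadic_index Tm n (\<theta> \<omega>))) \<omega>)"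
    using sum_Y(1) Y(2) by blast
  show "(\<integral>\<omega>. indicator B \<omega> * Y (dyadic_point Tm n (dyadic_index Tm n (\<theta> \<omega>))) \<omega> \<partial>M)
      = (\<integral>\<omega>. indicator B \<omega> * Z \<omega> \<partial>M)"
    using sum_Y(2) sum_Z(2) Y(2,3) Y(4)[OF _ B_levels] by simp
  show "(\<integral>\<omega>. indicator B \<omega> * \<bar>Y (dyadic_point Tm n (dyadic_index Tm n (\<theta> \<omega>))) \<omega>\<bar> \<partial>M)
      \<le> (\<integral>\<omega>. indicator B \<omega> * \<bar>Z \<omega>\<bar> \<partial>M)"
  proof -
    have "(\<Sum>k\<le>2^n. \<integral>\<omega>. indicator (?C k) \<omega> * \<bar>Y (dyadic_point Tm n k) \<omega>\<bar> \<partial>M)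
        \<le> (\<Sum>k\<le>2^n. \<integral>\<omega>. indicator (?C k) \<omega> * \<bar>Z \<omega>\<bar> \<partial>M)"
      by (rule sum_mono) (use closed_martingale_integral_abs_le[OF mg grid B_levels] in simp)
    then show ?thesis using sum_abs_Y(2) sum_abs_Z(2) Y(2,3) by simp
  qed
qed

lemma dyadic_stopped_superlevel_in_F:
  assumes mg: "closed_martingale Tm Y Z" and Tm: "0 < Tm" and \<theta>: "stopping_time F \<theta>"
    and rng: "\<forall>\<omega>\<in>space M. \<theta> \<omega> \<in> {0..Tm}" and k: "k \<le> 2^n"
  shows "{\<omega>\<in>space M. c < \<bar>Y (dyadic_point Tm n (dyadic_index Tm n (\<theta> \<omega>))) \<omega>\<bar>}
      \<inter> {\<omega>. dyadic_index Tm n (\<theta> \<omega>) = k} \<in> sets (F (dyadic_point Tm n k))"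
proof -
  let ?t = "dyadic_point Tm n k"
  have [measurable]: "Y ?t \<in> borel_measurable (F ?t)"
    using closed_martingaleD(1)[OF mg dyadic_point_in_interval[OF Tm k]] .
  have "{\<omega>\<in>space (F ?t). c < \<bar>Y ?t \<omega>\<bar>} \<in> sets (F ?t)" by measurable
  moreover have "space M \<inter> {\<omega>. dyadic_index Tm n (\<theta> \<omega>) = k} \<in> sets (F ?t)"
    using dyadic_level_set_in_F[OF Tm \<theta> _ sets.top[of "pre_sigma \<theta>"]] rng
    by (auto simp: space_pre_sigma)
  ultimately have "{\<omega>\<in>space M. c < \<bar>Y ?t \<omega>\<bar>} \<inter> (space M \<inter> {\<omega>. dyadic_index Tm n (\<theta> \<omega>) = k}) \<in> sets (F ?t)"
    by auto
  moreover have "{\<omega>\<in>space M. c < \<bar>Y ?t \<omega>\<bar>} \<inter> (space M \<inter> {\<omega>. dyadic_index Tm n (\<theta> \<omega>) = k})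
      = {\<omega>\<in>space M. c < \<bar>Y (dyadic_point Tm n (dyadic_index Tm n (\<theta> \<omega>))) \<omega>\<bar>}
        \<inter> {\<omega>. dyadic_index Tm n (\<theta> \<omega>) = k}"
    by auto
  ultimately show ?thesis by simp
qed

lemma closed_martingale_stopped_integral:
  assumes mg: "closed_martingale Tm Y Z" and Tm: "0 < Tm" and rc: "right_continuous_paths M Tm Y"
    and \<theta>: "stopping_time_in M F 0 Tm \<theta>" and int: "integrable M (\<lambda>\<omega>. Y (\<theta> \<omega>) \<omega>)"
    and B: "B \<in> sets (pre_sigma \<theta>)"
  shows "(\<integral>\<omega>. indicator B \<omega> * Y (\<theta> \<omega>) \<omega> \<partial>M) = (\<integral>\<omega>. indicator B \<omega> * Z \<omega> \<partial>M)"
proof -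
  define Wn where "Wn n \<omega> = Y (dyadic_point Tm n (dyadic_index Tm n (\<theta> \<omega>))) \<omega>" for n \<omega>
  have st: "stopping_time F \<theta>" and rng: "\<forall>\<omega>\<in>space M. \<theta> \<omega> \<in> {0..Tm}"
    using \<theta> by (auto simp: stopping_time_in_def)
  have space: "space M \<in> sets (pre_sigma \<theta>)"
    using sets.top[of "pre_sigma \<theta>"] by (simp add: space_pre_sigma)
  have levels: "A \<inter> {\<omega>. dyadic_index Tm n (\<theta> \<omega>) = k} \<in> sets (F (dyadic_point Tm n k))"
    if "A \<in> sets (pre_sigma \<theta>)" for A n k
    using dyadic_level_set_in_F[OF Tm st _ that] rng by auto
  note dyadic = closed_martingale_dyadic_stopped[OF mg Tm rng]
  have "B \<subseteq> space M" by (rule pre_sigma_subset_space[OF st B])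
  then have "{\<omega>\<in>B. \<theta> \<omega> \<le> Tm} = B" using rng by auto
  then have B_sets: "B \<in> sets M" using sets_pre_sigmaD[OF st B, of Tm] sets_F_subset by metis
  show ?thesis
  proof (rule integral_indicator_eq_of_tail_bound[where Wn=Wn])
    show "integrable M Z" using closed_martingaleD(3)[OF mg, of 0] Tm by simp
    show "integrable M (Wn n)" for n
    proof -
      have "integrable M (\<lambda>\<omega>. indicator (space M) \<omega> * Wn n \<omega>)"
        using dyadic(1)[OF order_refl levels[OF space]] unfolding Wn_def .
      moreover have "integrable M (\<lambda>\<omega>. indicator (space M) \<omega> * Wn n \<omega>) \<longleftrightarrow> integrable M (Wn n)"
        by (rule Bochner_Integration.integrable_cong) auto
      ultimately show ?thesis by simp
    qed
    show "(\<lambda>n. Wn n \<omega>) \<longlonglongrightarrow> Y (\<theta> \<omega>) \<omega>" if "\<omega> \<in> space M" for \<omega>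
      using that rng rc Tm unfolding Wn_def right_continuous_paths_def
      by (intro tendsto_dyadic_point_right_continuous) auto
    show "(\<integral>\<omega>. indicator B \<omega> * Wn n \<omega> \<partial>M) = (\<integral>\<omega>. indicator B \<omega> * Z \<omega> \<partial>M)" for n
      unfolding Wn_def by (rule dyadic(2)[OF pre_sigma_subset_space[OF st B] levels[OF B]])
    show "(\<integral>\<omega>. \<bar>Wn n \<omega>\<bar> \<partial>M) \<le> (\<integral>\<omega>. \<bar>Z \<omega>\<bar> \<partial>M)" for n
      using dyadic(3)[OF order_refl levels[OF space], of n] unfolding Wn_def
      by (simp add: indicator_def cong: Bochner_Integration.integral_cong)
  next
    fix n and c :: real
    show "(\<integral>\<omega>. indicator {\<omega>\<in>space M. c < \<bar>Wn n \<omega>\<bar>} \<omega> * \<bar>Wn n \<omega>\<bar> \<partial>M)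
        \<le> (\<integral>\<omega>. indicator {\<omega>\<in>space M. c < \<bar>Wn n \<omega>\<bar>} \<omega> * \<bar>Z \<omega>\<bar> \<partial>M)"
      unfolding Wn_def by (rule dyadic(3)) (use dyadic_stopped_superlevel_in_F[OF mg Tm st rng] in auto)
  qed (use int B_sets in auto)
qed

theorem optional_stopping_closed_martingale:
  assumes mg: "closed_martingale Tm Y Z" and Tm: "0 < Tm" and rc: "right_continuous_paths M Tm Y"
    and \<theta>: "stopping_time_in M F 0 Tm \<theta>" and t: "t \<in> {0..Tm}"
    and int_\<theta>: "integrable M (\<lambda>\<omega>. Y (\<theta> \<omega>) \<omega>)"
    and int_t: "integrable M (\<lambda>\<omega>. Y (min t (\<theta> \<omega>)) \<omega>)"
  shows "AE \<omega> in M. real_cond_exp M (F t) (\<lambda>\<omega>. Y (\<theta> \<omega>) \<omega>) \<omega> = Y (min t (\<theta> \<omega>)) \<omega>"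
proof (rule sigma_finite_subalgebra.real_cond_exp_charact[OF sigma_finite_subalgebra_F])
  have st: "stopping_time F \<theta>" using \<theta> by (simp add: stopping_time_in_def)
  show "(\<lambda>\<omega>. Y (min t (\<theta> \<omega>)) \<omega>) \<in> borel_measurable (F t)"
    using measurable_stopped_process[OF closed_martingale_imp_adapted[OF mg] rc \<theta> t] .
  fix A assume A: "A \<in> sets (F t)"
  have A_sets: "A \<in> sets M" using sets_F_subset[OF A] .
  define A' where "A' = A \<inter> {\<omega>\<in>space M. t < \<theta> \<omega>}"
  have A'_F: "A' \<in> sets (F t)" and A'_pre: "A' \<in> sets (pre_sigma \<theta>)"
    unfolding A'_def using Int_after_in_F[OF st A] Int_after_in_pre_sigma[OF st A] by auto
  have A'_sets: "A' \<in> sets M" using sets_F_subset[OF A'_F] .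
  have int_Yt: "integrable M (Y t)" using closed_martingaleD(2)[OF mg t] .
  have "(\<integral>\<omega>. indicator A \<omega> * Y (\<theta> \<omega>) \<omega> \<partial>M) - (\<integral>\<omega>. indicator A \<omega> * Y (min t (\<theta> \<omega>)) \<omega> \<partial>M)
     = (\<integral>\<omega>. indicator A \<omega> * Y (\<theta> \<omega>) \<omega> - indicator A \<omega> * Y (min t (\<theta> \<omega>)) \<omega> \<partial>M)"
    using integrable_indicator_mult[OF A_sets int_\<theta>] integrable_indicator_mult[OF A_sets int_t] by simp
  also have "\<dots> = (\<integral>\<omega>. indicator A' \<omega> * Y (\<theta> \<omega>) \<omega> - indicator A' \<omega> * Y t \<omega> \<partial>M)"
    by (rule Bochner_Integration.integral_cong) (auto simp: A'_def indicator_def min_def)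
  also have "\<dots> = (\<integral>\<omega>. indicator A' \<omega> * Y (\<theta> \<omega>) \<omega> \<partial>M) - (\<integral>\<omega>. indicator A' \<omega> * Y t \<omega> \<partial>M)"
    using integrable_indicator_mult[OF A'_sets int_\<theta>] integrable_indicator_mult[OF A'_sets int_Yt] by simp
  also have "\<dots> = 0"
    using closed_martingale_stopped_integral[OF mg Tm rc \<theta> int_\<theta> A'_pre] closed_martingaleD(4)[OF mg t A'_F]
    by simp
  finally show "(\<integral>\<omega>\<in>A. Y (\<theta> \<omega>) \<omega> \<partial>M) = (\<integral>\<omega>\<in>A. Y (min t (\<theta> \<omega>)) \<omega> \<partial>M)"
    unfolding set_lebesgue_integral_def by simp
qed (use int_\<theta> int_t in auto)

lemma va_closed_martingale:
  assumes Tm: "0 \<le> Tm" and X: "adapted F Tm X" "\<forall>t\<in>{0..Tm}. integrable M (X t)"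
    and V: "adapted F Tm V" "\<forall>t\<in>{0..Tm}. integrable M (V t)"
    and va: "\<forall>t\<in>{0..Tm}. AE \<omega> in M. V t \<omega> = va M F Tm X t \<omega>"
  shows "closed_martingale Tm (\<lambda>t \<omega>. X t \<omega> + V t \<omega>) (X Tm)"
  unfolding closed_martingale_def
proof (intro conjI ballI)
  show "integrable M (X Tm)" using X(2) Tm by simp
  fix t assume t: "t \<in> {0..Tm}"
  have [measurable]: "X t \<in> borel_measurable (F t)" "V t \<in> borel_measurable (F t)"
    using X(1) V(1) t by (auto simp: adapted_def)
  show "(\<lambda>\<omega>. X t \<omega> + V t \<omega>) \<in> borel_measurable (F t)" by measurable
  show "integrable M (\<lambda>\<omega>. X t \<omega> + V t \<omega>)" using X(2) V(2) t by auto
  fix A assume A: "A \<in> sets (F t)"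
  interpret sigma_finite_subalgebra M "F t" by (rule sigma_finite_subalgebra_F)
  have A_sets: "A \<in> sets M" using sets_F_subset[OF A] .
  have int: "integrable M (X Tm)" "integrable M (X t)" "integrable M (V t)" using X(2) V(2) t Tm by auto
  have "AE \<omega> in M. V t \<omega> = real_cond_exp M (F t) (\<lambda>\<omega>. X Tm \<omega> - X t \<omega>) \<omega>"
    using va t by (simp add: va_def)
  then have "(\<integral>\<omega>. indicator A \<omega> * V t \<omega> \<partial>M)
      = (\<integral>\<omega>. indicator A \<omega> * real_cond_exp M (F t) (\<lambda>\<omega>. X Tm \<omega> - X t \<omega>) \<omega> \<partial>M)"
    using int(3) A_sets by (intro integral_cong_AE) (auto elim: eventually_mono)
  also have "\<dots> = (\<integral>\<omega>. indicator A \<omega> * (X Tm \<omega> - X t \<omega>) \<partial>M)"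
    using integrable_indicator_mult[OF A_sets, of "\<lambda>\<omega>. X Tm \<omega> - X t \<omega>"] int A A_sets
    by (intro real_cond_exp_intg(2)) auto
  finally show "(\<integral>\<omega>. indicator A \<omega> * (X t \<omega> + V t \<omega>) \<partial>M) = (\<integral>\<omega>. indicator A \<omega> * X Tm \<omega> \<partial>M)"
    using integrable_indicator_mult[OF A_sets] int by (simp add: distrib_left right_diff_distrib)
qed

text \<open>Optional stopping for the martingale \<open>X + K\<close>.\<close>

lemma va_stopped_drift:
  assumes mart: "martingale M F Tm (\<lambda>t \<omega>. X t \<omega> + K t \<omega>)" and Tm: "0 < Tm"
    and X: "right_continuous_paths M Tm X" and K: "adapted F Tm K" "right_continuous_paths M Tm K"
    and \<theta>: "stopping_time_in M F 0 Tm \<theta>" and t: "t \<in> {0..Tm}"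
    and int: "integrable M (\<lambda>\<omega>. X (\<theta> \<omega>) \<omega>)" "integrable M (\<lambda>\<omega>. K (\<theta> \<omega>) \<omega>)"
      "integrable M (\<lambda>\<omega>. X (min t (\<theta> \<omega>)) \<omega>)" "integrable M (\<lambda>\<omega>. K (min t (\<theta> \<omega>)) \<omega>)"
  shows "AE \<omega> in M. va M F Tm (stopped K \<theta>) t \<omega>
    = X (min t (\<theta> \<omega>)) \<omega> - real_cond_exp M (F t) (\<lambda>\<omega>. X (\<theta> \<omega>) \<omega>) \<omega>"
proof -
  interpret sigma_finite_subalgebra M "F t" by (rule sigma_finite_subalgebra_F)
  have rng: "\<forall>\<omega>\<in>space M. min Tm (\<theta> \<omega>) = \<theta> \<omega>" using \<theta> by (auto simp: stopping_time_in_def)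
  have "AE \<omega> in M. real_cond_exp M (F t) (\<lambda>\<omega>. X (\<theta> \<omega>) \<omega> + K (\<theta> \<omega>) \<omega>) \<omega>
      = X (min t (\<theta> \<omega>)) \<omega> + K (min t (\<theta> \<omega>)) \<omega>"
    using optional_stopping_closed_martingale[OF martingale_imp_closed_martingale[OF mart] Tm
        right_continuous_paths_add[OF X K(2)] \<theta> t] Tm int
    by simp
  then have XK: "has_real_cond_exp M (F t) (\<lambda>\<omega>. X (\<theta> \<omega>) \<omega> + K (\<theta> \<omega>) \<omega>)
      (\<lambda>\<omega>. X (min t (\<theta> \<omega>)) \<omega> + K (min t (\<theta> \<omega>)) \<omega>)"
    using int by (simp add: has_real_cond_exp_def)
  have "has_real_cond_exp M (F t) (\<lambda>\<omega>. K (min t (\<theta> \<omega>)) \<omega>) (\<lambda>\<omega>. K (min t (\<theta> \<omega>)) \<omega>)"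
    using int(4) measurable_stopped_process[OF K \<theta> t] by (rule has_real_cond_exp_measurable)
  from has_real_cond_exp_diff[OF has_real_cond_exp_diff[OF XK has_real_cond_exp_real_cond_exp[OF int(1)]] this]
  have "has_real_cond_exp M (F t) (\<lambda>\<omega>. stopped K \<theta> Tm \<omega> - stopped K \<theta> t \<omega>)
      (\<lambda>\<omega>. X (min t (\<theta> \<omega>)) \<omega> - real_cond_exp M (F t) (\<lambda>\<omega>. X (\<theta> \<omega>) \<omega>) \<omega>)"
    by (rule has_real_cond_exp_cong) (use rng in \<open>auto simp: stopped_def\<close>)
  then show ?thesis unfolding va_def by (rule has_real_cond_expD)
qed

lemma martingale_increment_cond_exp:
  assumes mart: "martingale M F Tm Y" and t: "t \<in> {0..Tm}"
  shows "has_real_cond_exp M (F t) (\<lambda>\<omega>. Y Tm \<omega> - Y t \<omega>) (\<lambda>_. 0)"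
proof -
  interpret sigma_finite_subalgebra M "F t" by (rule sigma_finite_subalgebra_F)
  have "has_real_cond_exp M (F t) (Y Tm) (Y t)"
    using mart t by (auto simp: has_real_cond_exp_def martingale_def)
  moreover have "has_real_cond_exp M (F t) (Y t) (Y t)"
    using mart t by (intro has_real_cond_exp_measurable) (auto simp: martingale_def adapted_def)
  ultimately show ?thesis by (rule has_real_cond_exp_cong[OF has_real_cond_exp_diff]) simp_all
qed

lemma optional_stopping_increment:
  assumes mg: "closed_martingale Tm Y Z" and Tm: "0 < Tm" and rc: "right_continuous_paths M Tm Y"
    and \<theta>: "stopping_time_in M F 0 Tm \<theta>" and t: "t \<in> {0..Tm}"
    and int_\<theta>: "integrable M (\<lambda>\<omega>. Y (\<theta> \<omega>) \<omega>)"
    and int_t: "integrable M (\<lambda>\<omega>. Y (min t (\<theta> \<omega>)) \<omega>)"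
  shows "has_real_cond_exp M (F t) (\<lambda>\<omega>. Y (\<theta> \<omega>) \<omega> - Y (min t (\<theta> \<omega>)) \<omega>) (\<lambda>_. 0)"
proof -
  interpret sigma_finite_subalgebra M "F t" by (rule sigma_finite_subalgebra_F)
  have "has_real_cond_exp M (F t) (\<lambda>\<omega>. Y (\<theta> \<omega>) \<omega>) (\<lambda>\<omega>. Y (min t (\<theta> \<omega>)) \<omega>)"
    using optional_stopping_closed_martingale[OF assms] int_\<theta> by (simp add: has_real_cond_exp_def)
  moreover have "has_real_cond_exp M (F t) (\<lambda>\<omega>. Y (min t (\<theta> \<omega>)) \<omega>) (\<lambda>\<omega>. Y (min t (\<theta> \<omega>)) \<omega>)"
    using int_t measurable_stopped_process[OF closed_martingale_imp_adapted[OF mg] rc \<theta> t]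
    by (rule has_real_cond_exp_measurable)
  ultimately show ?thesis by (rule has_real_cond_exp_cong[OF has_real_cond_exp_diff]) simp_all
qed

end

lemma pnl_recalibrated:
  assumes t: "t \<in> {0..Tm}" and \<theta>: "\<theta> \<omega> \<in> {0..Tm}"
    and recalibrated: "\<forall>u\<in>{0..Tm}. u < \<tau>s \<omega> \<longrightarrow> p u \<omega> = Pv u \<omega>"
    and optimal_call: "ind_before \<tau>s (\<theta> \<omega>) \<omega> * q (\<theta> \<omega>) \<omega> = 0"
  shows "pnl Qc Qv q Pc Pv p \<tau>s \<theta> h t \<omega> =
      from0 (stopped (\<lambda>s \<omega>. Qc s \<omega> + ind_before \<tau>s s \<omega> * q s \<omega> + (1 - ind_before \<tau>s s \<omega>) * Qv s \<omega>) \<theta>) t \<omega>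
    - from0 (stopped (\<lambda>s \<omega>. Pc s \<omega> + Pv s \<omega>) \<theta>) t \<omega>
    - h t \<omega> - (1 - ind_before \<theta> t \<omega>) * (1 - ind_before \<tau>s (\<theta> \<omega>) \<omega>) * Qv (\<theta> \<omega>) \<omega>"
proof -
  have hedge: "Pc u \<omega> + ind_before \<tau>s u \<omega> * p u \<omega> + (1 - ind_before \<tau>s u \<omega>) * Pv u \<omega> = Pc u \<omega> + Pv u \<omega>"
    if "u \<in> {0..Tm}" for u
    using recalibrated that by (cases "u < \<tau>s \<omega>") (auto simp: ind_before_def)
  have "min t (\<theta> \<omega>) \<in> {0..Tm}" "min 0 (\<theta> \<omega>) \<in> {0..Tm}" using t \<theta> by auto
  note hedge = hedge[OF this(1)] hedge[OF this(2)]
  have call: "(1 - ind_before \<theta> t \<omega>) * (ind_before \<tau>s (\<theta> \<omega>) \<omega> * q (\<theta> \<omega>) \<omega>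
      + (1 - ind_before \<tau>s (\<theta> \<omega>) \<omega>) * Qv (\<theta> \<omega>) \<omega>)
    = (1 - ind_before \<theta> t \<omega>) * (1 - ind_before \<tau>s (\<theta> \<omega>) \<omega>) * Qv (\<theta> \<omega>) \<omega>"
    using optimal_call by simp
  show ?thesis unfolding pnl_def from0_def stopped_def hedge call by simp
qed

subsection \<open>The bad trader\<close>

locale bad_trader = filtered_prob_space M F
  for M :: "'a measure" and F :: "real \<Rightarrow> 'a measure" +
  fixes Tm :: real and Qc Qv K Pc Pv q p h :: "real \<Rightarrow> 'a \<Rightarrow> real" and \<tau>s \<theta> :: "'a \<Rightarrow> real"
  assumes adapted: "X \<in> {Qc, Qv, K, Pc, Pv, q} \<Longrightarrow> adapted F Tm X"
    and right_continuous: "X \<in> {Qc, Qv, K, Pc, Pv, q} \<Longrightarrow> right_continuous_paths M Tm X"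
    and integrable_stopped: "X \<in> {Qc, Qv, K, Pc, Pv, q} \<Longrightarrow> stopping_time_in M F 0 Tm \<sigma> \<Longrightarrow>
      integrable M (\<lambda>\<omega>. X (\<sigma> \<omega>) \<omega>)"
    and Qc_0: "\<forall>\<omega>\<in>space M. Qc 0 \<omega> = 0"
    and drift: "martingale M F Tm (\<lambda>t \<omega>. Qc t \<omega> + Qv t \<omega> + K t \<omega>)"
    and Pv_va: "\<forall>t\<in>{0..Tm}. AE \<omega> in M. Pv t \<omega> = va M F Tm Pc t \<omega>"
    and h: "martingale M F Tm h"
    and \<tau>s: "stopping_time F \<tau>s" "\<forall>\<omega>\<in>space M. \<tau>s \<omega> \<in> {0<..Tm}"
    and \<theta>: "stopping_time_in M F 0 Tm \<theta>"
    and recalibrated: "\<forall>t\<in>{0..Tm}. \<forall>\<omega>\<in>space M. t < \<tau>s \<omega> \<longrightarrow> p t \<omega> = Pv t \<omega>"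
    and optimal_call: "\<forall>\<omega>\<in>space M. ind_before \<tau>s (\<theta> \<omega>) \<omega> * q (\<theta> \<omega>) \<omega> = 0"
begin

text \<open>\<open>D_pre\<close>, \<open>D_post\<close> and \<open>VK\<close> are the processes \<open>D\<close>, \<open>D'\<close> and \<open>va(K\<^sup>\<theta>)\<close> of the
  statement.\<close>

abbreviation "Js \<equiv> ind_before \<tau>s"
abbreviation "Je \<equiv> ind_before \<theta>"
abbreviation "PNL \<equiv> pnl Qc Qv q Pc Pv p \<tau>s \<theta> h"
abbreviation "HVA t \<omega> \<equiv> - va M F Tm PNL t \<omega>"
abbreviation "D_pre t \<equiv> real_cond_exp M (F t) (\<lambda>\<omega>. Js (\<theta> \<omega>) \<omega> * Qv (\<theta> \<omega>) \<omega>)"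
abbreviation "D_post t \<equiv> real_cond_exp M (F t) (\<lambda>\<omega>. (1 - Js (\<theta> \<omega>) \<omega>) * Qv (\<theta> \<omega>) \<omega>)"
abbreviation "VK \<equiv> va M F Tm (stopped K \<theta>)"

lemma Tm_pos: "0 < Tm"
proof -
  obtain \<omega> where "\<omega> \<in> space M" using not_empty by blast
  then show ?thesis using \<tau>s(2) by fastforce
qed

lemma \<theta>_range: "\<omega> \<in> space M \<Longrightarrow> \<theta> \<omega> \<in> {0..Tm}"
  using \<theta> by (simp add: stopping_time_in_def)

lemma integrable_at:
  assumes "X \<in> {Qc, Qv, K, Pc, Pv, q}" "t \<in> {0..Tm}"
  shows "integrable M (\<lambda>\<omega>. X (\<theta> \<omega>) \<omega>)" "integrable M (\<lambda>\<omega>. X (min t (\<theta> \<omega>)) \<omega>)"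
    and "integrable M (X t)"
proof -
  have "stopping_time_in M F 0 Tm (\<lambda>\<omega>. min t (\<theta> \<omega>))" "stopping_time_in M F 0 Tm (\<lambda>_. t)"
    using \<theta> assms(2) by (auto simp: stopping_time_in_def intro: stopping_time_min stopping_time_const)
  then show "integrable M (\<lambda>\<omega>. X (\<theta> \<omega>) \<omega>)" "integrable M (\<lambda>\<omega>. X (min t (\<theta> \<omega>)) \<omega>)"
    and "integrable M (X t)"
    using integrable_stopped[OF assms(1)] \<theta> by auto
qed

lemma measurable_at_min:
  "X \<in> {Qc, Qv, K, Pc, Pv, q} \<Longrightarrow> t \<in> {0..Tm} \<Longrightarrow> (\<lambda>\<omega>. X (min t (\<theta> \<omega>)) \<omega>) \<in> borel_measurable (F t)"
  using measurable_stopped_process[OF adapted right_continuous \<theta>] .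

lemma measurable_Js_min: "t \<in> {0..Tm} \<Longrightarrow> (\<lambda>\<omega>. Js (min t (\<theta> \<omega>)) \<omega>) \<in> borel_measurable (F t)"
  using measurable_stopped_process[OF adapted_ind_before[OF \<tau>s(1)] right_continuous_paths_ind_before \<theta>] .

lemma measurable_Je: "t \<in> {0..Tm} \<Longrightarrow> Je t \<in> borel_measurable (F t)"
  using adapted_ind_before[where \<sigma>=\<theta> and Tm=Tm] \<theta> by (auto simp: stopping_time_in_def adapted_def)

lemma measurable_Js_at: "(\<lambda>\<omega>. Js (\<theta> \<omega>) \<omega>) \<in> borel_measurable M"
proof -
  have sub: "\<And>t. sets (F t) \<subseteq> sets M" using sets_F_subset by blast
  have [measurable]: "\<theta> \<in> borel_measurable M" "\<tau>s \<in> borel_measurable M"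
    using measurable_stopping_time[OF _ sub] \<theta> \<tau>s(1) by (auto simp: stopping_time_in_def)
  show ?thesis unfolding ind_before_def by measurable
qed

lemma integrable_Js_Qv:
  "integrable M (\<lambda>\<omega>. Js (\<theta> \<omega>) \<omega> * Qv (\<theta> \<omega>) \<omega>)"
  "integrable M (\<lambda>\<omega>. (1 - Js (\<theta> \<omega>) \<omega>) * Qv (\<theta> \<omega>) \<omega>)"
proof -
  have Qv: "integrable M (\<lambda>\<omega>. Qv (\<theta> \<omega>) \<omega>)" using integrable_at(1)[of Qv 0] Tm_pos by simp
  have "(\<lambda>\<omega>. 1 - Js (\<theta> \<omega>) \<omega>) \<in> borel_measurable M"
    by (intro borel_measurable_diff borel_measurable_const measurable_Js_at)
  then show "integrable M (\<lambda>\<omega>. Js (\<theta> \<omega>) \<omega> * Qv (\<theta> \<omega>) \<omega>)"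
    "integrable M (\<lambda>\<omega>. (1 - Js (\<theta> \<omega>) \<omega>) * Qv (\<theta> \<omega>) \<omega>)"
    using integrable_bounded_mult[OF Qv measurable_Js_at abs_ind_before_le(1)]
      integrable_bounded_mult[OF Qv _ abs_ind_before_le(2)] by auto
qed

lemma pnl_eq:
  assumes "t \<in> {0..Tm}" "\<omega> \<in> space M"
  shows "PNL t \<omega> =
      from0 (stopped (\<lambda>s \<omega>. Qc s \<omega> + Js s \<omega> * q s \<omega> + (1 - Js s \<omega>) * Qv s \<omega>) \<theta>) t \<omega>
    - from0 (stopped (\<lambda>s \<omega>. Pc s \<omega> + Pv s \<omega>) \<theta>) t \<omega>
    - h t \<omega> - (1 - Je t \<omega>) * (1 - Js (\<theta> \<omega>) \<omega>) * Qv (\<theta> \<omega>) \<omega>"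
  using pnl_recalibrated[where \<theta>=\<theta> and \<omega>=\<omega>, OF assms(1) \<theta>_range[OF assms(2)]] assms(2)
    recalibrated optimal_call by blast

lemma pnl_increment:
  assumes "t \<in> {0..Tm}" "\<omega> \<in> space M"
  shows "PNL Tm \<omega> - PNL t \<omega> = (Qc (\<theta> \<omega>) \<omega> + Qv (\<theta> \<omega>) \<omega>) - Js (\<theta> \<omega>) \<omega> * Qv (\<theta> \<omega>) \<omega>
    - (Qc (min t (\<theta> \<omega>)) \<omega> + Js (min t (\<theta> \<omega>)) \<omega> * q (min t (\<theta> \<omega>)) \<omega>
        + (1 - Js (min t (\<theta> \<omega>)) \<omega>) * Qv (min t (\<theta> \<omega>)) \<omega>)
    - ((Pc (\<theta> \<omega>) \<omega> + Pv (\<theta> \<omega>) \<omega>) - (Pc (min t (\<theta> \<omega>)) \<omega> + Pv (min t (\<theta> \<omega>)) \<omega>))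
    - (h Tm \<omega> - h t \<omega>)
    - Je t \<omega> * ((1 - Js (\<theta> \<omega>) \<omega>) * Qv (\<theta> \<omega>) \<omega>)"
proof -
  have m: "min Tm (\<theta> \<omega>) = \<theta> \<omega>" and j: "Je Tm \<omega> = 0"
    using \<theta>_range[OF assms(2)] by (auto simp: ind_before_def)
  have "Tm \<in> {0..Tm}" using Tm_pos by simp
  note at_Tm = pnl_eq[OF this assms(2), unfolded from0_def stopped_def m j]
  note at_t = pnl_eq[OF assms, unfolded from0_def stopped_def]
  show ?thesis unfolding at_Tm at_t using optimal_call assms(2) by (simp add: algebra_simps)
qed

lemma va_stopped_drift_eq:
  assumes t: "t \<in> {0..Tm}"
  shows "AE \<omega> in M. VK t \<omega> =
    Qc (min t (\<theta> \<omega>)) \<omega> + Qv (min t (\<theta> \<omega>)) \<omega>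
    - real_cond_exp M (F t) (\<lambda>\<omega>. Qc (\<theta> \<omega>) \<omega> + Qv (\<theta> \<omega>) \<omega>) \<omega>"
  using va_stopped_drift[where X="\<lambda>t \<omega>. Qc t \<omega> + Qv t \<omega>", OF drift Tm_pos
      right_continuous_paths_add[OF right_continuous right_continuous] adapted right_continuous \<theta> t]
    integrable_at[OF _ t]
  by simp

lemma cond_exp_hedge_increment:
  assumes t: "t \<in> {0..Tm}"
  shows "has_real_cond_exp M (F t)
    (\<lambda>\<omega>. (Pc (\<theta> \<omega>) \<omega> + Pv (\<theta> \<omega>) \<omega>) - (Pc (min t (\<theta> \<omega>)) \<omega> + Pv (min t (\<theta> \<omega>)) \<omega>)) (\<lambda>_. 0)"
proof -
  have "closed_martingale Tm (\<lambda>t \<omega>. Pc t \<omega> + Pv t \<omega>) (Pc Tm)"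
    using va_closed_martingale[OF _ adapted _ adapted _ Pv_va] integrable_at(3) Tm_pos by simp
  from optional_stopping_increment[OF this Tm_pos
      right_continuous_paths_add[OF right_continuous right_continuous] \<theta> t]
  show ?thesis using integrable_at[OF _ t] by simp
qed

lemma cond_exp_model_value:
  assumes t: "t \<in> {0..Tm}"
  defines "X \<equiv> \<lambda>\<omega>. Qc (min t (\<theta> \<omega>)) \<omega> + Js (min t (\<theta> \<omega>)) \<omega> * q (min t (\<theta> \<omega>)) \<omega>
      + (1 - Js (min t (\<theta> \<omega>)) \<omega>) * Qv (min t (\<theta> \<omega>)) \<omega>"
  shows "has_real_cond_exp M (F t) X X"
proof (rule sigma_finite_subalgebra.has_real_cond_exp_measurable[OF sigma_finite_subalgebra_F])
  have [measurable]: "(\<lambda>\<omega>. Js (min t (\<theta> \<omega>)) \<omega>) \<in> borel_measurable (F t)"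
    "(\<lambda>\<omega>. Qc (min t (\<theta> \<omega>)) \<omega>) \<in> borel_measurable (F t)"
    "(\<lambda>\<omega>. Qv (min t (\<theta> \<omega>)) \<omega>) \<in> borel_measurable (F t)"
    "(\<lambda>\<omega>. q (min t (\<theta> \<omega>)) \<omega>) \<in> borel_measurable (F t)"
    using measurable_Js_min[OF t] measurable_at_min[OF _ t] by auto
  have [measurable]: "(\<lambda>\<omega>. Js (min t (\<theta> \<omega>)) \<omega>) \<in> borel_measurable M"
    using measurable_F_M[OF measurable_Js_min[OF t]] .
  have [measurable]: "(\<lambda>\<omega>. 1 - Js (min t (\<theta> \<omega>)) \<omega>) \<in> borel_measurable M"
    by measurable
  show "X \<in> borel_measurable (F t)" unfolding X_def by measurable
  show "integrable M X"
    unfolding X_def using integrable_at[OF _ t]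
    by (intro Bochner_Integration.integrable_add integrable_bounded_mult abs_ind_before_le) simp_all
qed

lemma hva_eq:
  assumes t: "t \<in> {0..Tm}"
  shows "AE \<omega> in M. HVA t \<omega> =
    stopped (\<lambda>s \<omega>. Js s \<omega> * (q s \<omega> - Qv s \<omega>)) \<theta> t \<omega> + D_pre t \<omega> + Je t \<omega> * D_post t \<omega> + VK t \<omega>"
proof -
  interpret sigma_finite_subalgebra M "F t" by (rule sigma_finite_subalgebra_F)
  have Q: "has_real_cond_exp M (F t) (\<lambda>\<omega>. Qc (\<theta> \<omega>) \<omega> + Qv (\<theta> \<omega>) \<omega>)
      (\<lambda>\<omega>. Qc (min t (\<theta> \<omega>)) \<omega> + Qv (min t (\<theta> \<omega>)) \<omega> - VK t \<omega>)"
    unfolding has_real_cond_exp_def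
  proof
    show "integrable M (\<lambda>\<omega>. Qc (\<theta> \<omega>) \<omega> + Qv (\<theta> \<omega>) \<omega>)"
      by (intro Bochner_Integration.integrable_add integrable_at(1)[OF _ t]) auto
    show "AE \<omega> in M. real_cond_exp M (F t) (\<lambda>\<omega>. Qc (\<theta> \<omega>) \<omega> + Qv (\<theta> \<omega>) \<omega>) \<omega>
        = Qc (min t (\<theta> \<omega>)) \<omega> + Qv (min t (\<theta> \<omega>)) \<omega> - VK t \<omega>"
      using va_stopped_drift_eq[OF t] by eventually_elim simp
  qed
  have "integrable M (\<lambda>\<omega>. Je t \<omega> * ((1 - Js (\<theta> \<omega>) \<omega>) * Qv (\<theta> \<omega>) \<omega>))"
    by (rule integrable_bounded_mult[OF integrable_Js_Qv(2) measurable_F_M[OF measurable_Je[OF t]]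
        abs_ind_before_le(1)])
  with has_real_cond_exp_real_cond_exp[OF integrable_Js_Qv(2)] measurable_Je[OF t]
  have Je_D_post: "has_real_cond_exp M (F t) (\<lambda>\<omega>. Je t \<omega> * ((1 - Js (\<theta> \<omega>) \<omega>) * Qv (\<theta> \<omega>) \<omega>))
      (\<lambda>\<omega>. Je t \<omega> * D_post t \<omega>)"
    by (rule has_real_cond_exp_mult)
  \<comment> \<open>the terms of \<open>pnl_increment\<close>, one by one\<close>
  from has_real_cond_exp_diff[OF has_real_cond_exp_diff[OF has_real_cond_exp_diff[OF
        has_real_cond_exp_diff[OF has_real_cond_exp_diff[OF Q
          has_real_cond_exp_real_cond_exp[OF integrable_Js_Qv(1)]] cond_exp_model_value[OF t]]
        cond_exp_hedge_increment[OF t]] martingale_increment_cond_exp[OF h t]] Je_D_post]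
  have "has_real_cond_exp M (F t) (\<lambda>\<omega>. PNL Tm \<omega> - PNL t \<omega>) (\<lambda>\<omega>. - (
      stopped (\<lambda>s \<omega>. Js s \<omega> * (q s \<omega> - Qv s \<omega>)) \<theta> t \<omega> + D_pre t \<omega> + Je t \<omega> * D_post t \<omega> + VK t \<omega>))"
    by (rule has_real_cond_exp_cong) (simp_all add: pnl_increment[OF t] stopped_def algebra_simps)
  from has_real_cond_expD[OF this] show ?thesis unfolding va_def by (auto elim: eventually_mono)
qed

lemma cond_exp_Qc_Qv_0:
  "AE \<omega> in M. real_cond_exp M (F 0) (\<lambda>\<omega>. Qc (\<theta> \<omega>) \<omega> + Qv (\<theta> \<omega>) \<omega>) \<omega>
    = real_cond_exp M (F 0) (\<lambda>\<omega>. Qc (\<theta> \<omega>) \<omega>) \<omega> + (D_pre 0 \<omega> + D_post 0 \<omega>)"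
proof -
  interpret sigma_finite_subalgebra M "F 0" by (rule sigma_finite_subalgebra_F)
  have "integrable M (\<lambda>\<omega>. Qc (\<theta> \<omega>) \<omega>)" using integrable_at(1)[of Qc 0] Tm_pos by simp
  from has_real_cond_exp_add[OF has_real_cond_exp_real_cond_exp[OF this] has_real_cond_exp_add[OF
      has_real_cond_exp_real_cond_exp[OF integrable_Js_Qv(1)]
      has_real_cond_exp_real_cond_exp[OF integrable_Js_Qv(2)]]]
  have "has_real_cond_exp M (F 0) (\<lambda>\<omega>. Qc (\<theta> \<omega>) \<omega> + Qv (\<theta> \<omega>) \<omega>)
      (\<lambda>\<omega>. real_cond_exp M (F 0) (\<lambda>\<omega>. Qc (\<theta> \<omega>) \<omega>) \<omega> + (D_pre 0 \<omega> + D_post 0 \<omega>))"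
    by (rule has_real_cond_exp_cong) (simp_all add: algebra_simps)
  then show ?thesis by (rule has_real_cond_expD)
qed

text \<open>Either \<open>\<theta> > 0\<close> or \<open>\<theta> = 0 < \<tau>s\<close>: this is where \<open>\<tau>s > 0\<close> is used.\<close>

lemma no_exit_after_switch_0: "AE \<omega> in M. (1 - Je 0 \<omega>) * D_post 0 \<omega> = 0"
proof -
  interpret sigma_finite_subalgebra M "F 0" by (rule sigma_finite_subalgebra_F)
  have "Je 0 \<in> borel_measurable (F 0)" using measurable_Je Tm_pos by simp
  then have u: "(\<lambda>\<omega>. 1 - Je 0 \<omega>) \<in> borel_measurable (F 0)"
    by (rule borel_measurable_diff[OF borel_measurable_const])
  have "integrable M (\<lambda>\<omega>. (1 - Je 0 \<omega>) * ((1 - Js (\<theta> \<omega>) \<omega>) * Qv (\<theta> \<omega>) \<omega>))"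
    by (rule integrable_bounded_mult[OF integrable_Js_Qv(2) measurable_F_M[OF u] abs_ind_before_le(2)])
  with has_real_cond_exp_real_cond_exp[OF integrable_Js_Qv(2)] u
  have mult: "has_real_cond_exp M (F 0) (\<lambda>\<omega>. (1 - Je 0 \<omega>) * ((1 - Js (\<theta> \<omega>) \<omega>) * Qv (\<theta> \<omega>) \<omega>))
      (\<lambda>\<omega>. (1 - Je 0 \<omega>) * D_post 0 \<omega>)"
    by (rule has_real_cond_exp_mult)
  have zero: "has_real_cond_exp M (F 0) (\<lambda>\<omega>. (1 - Je 0 \<omega>) * ((1 - Js (\<theta> \<omega>) \<omega>) * Qv (\<theta> \<omega>) \<omega>))
      (\<lambda>\<omega>. 0)"
  proof (rule has_real_cond_exp_cong[OF has_real_cond_exp_measurable[of "\<lambda>_. 0"]])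
    fix \<omega> assume "\<omega> \<in> space M"
    then have "0 < \<tau>s \<omega>" "0 \<le> \<theta> \<omega>" using \<tau>s(2) \<theta>_range by auto
    then show "(1 - Je 0 \<omega>) * ((1 - Js (\<theta> \<omega>) \<omega>) * Qv (\<theta> \<omega>) \<omega>) = 0"
      by (cases "\<theta> \<omega> = 0") (auto simp: ind_before_def)
  qed simp_all
  show ?thesis using has_real_cond_expD[OF mult] has_real_cond_expD[OF zero] by eventually_elim simp
qed

lemma hva_0_eq: "AE \<omega> in M. HVA 0 \<omega> = q 0 \<omega> - real_cond_exp M (F 0) (\<lambda>\<omega>. Qc (\<theta> \<omega>) \<omega>) \<omega>"
proof -
  have t0: "0 \<in> {0..Tm}" using Tm_pos by simp
  show ?thesis
    using hva_eq[OF t0] va_stopped_drift_eq[OF t0] cond_exp_Qc_Qv_0 no_exit_after_switch_0 AE_space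
  proof eventually_elim
    case (elim \<omega>)
    have "min 0 (\<theta> \<omega>) = 0" "Js 0 \<omega> = 1" "Qc 0 \<omega> = 0"
      using \<theta>_range \<tau>s(2) Qc_0 elim(5) by (auto simp: ind_before_def)
    then have "HVA 0 \<omega> = (q 0 \<omega> - Qv 0 \<omega>) + D_pre 0 \<omega> + Je 0 \<omega> * D_post 0 \<omega> + VK 0 \<omega>"
      and "VK 0 \<omega> = Qv 0 \<omega> - real_cond_exp M (F 0) (\<lambda>\<omega>. Qc (\<theta> \<omega>) \<omega> + Qv (\<theta> \<omega>) \<omega>) \<omega>"
      using elim(1,2) unfolding stopped_def by simp_all
    then show ?case using elim(3,4) by algebra
  qed
qed

lemma pnl_hva_decomposition:
  assumes t: "t \<in> {0..Tm}"
  shows "AE \<omega> in M. - PNL t \<omega> + (HVA t \<omega> - HVA 0 \<omega>) =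
      - from0 (stopped (\<lambda>s \<omega>. Qc s \<omega> + Qv s \<omega>) \<theta>) t \<omega>
      + from0 (stopped (\<lambda>s \<omega>. Pc s \<omega> + Pv s \<omega>) \<theta>) t \<omega>
      + h t \<omega> + (1 - Je t \<omega>) * (1 - Js (\<theta> \<omega>) \<omega>) * Qv (\<theta> \<omega>) \<omega>
      + (D_pre t \<omega> - D_pre 0 \<omega>) + (Je t \<omega> * D_post t \<omega> - Je 0 \<omega> * D_post 0 \<omega>) + (VK t \<omega> - VK 0 \<omega>)"
proof -
  have t0: "0 \<in> {0..Tm}" using Tm_pos by simp
  show ?thesis using hva_eq[OF t] hva_eq[OF t0] AE_space
  proof eventually_elim
    case (elim \<omega>)
    have "min 0 (\<theta> \<omega>) = 0" using \<theta>_range[OF elim(3)] by simp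
    then show ?case using elim(1,2) pnl_eq[OF t elim(3)] unfolding from0_def stopped_def
      by (simp add: algebra_simps)
  qed
qed

end

theorem proposition3p2:
  fixes M :: "'a measure" and F :: "real \<Rightarrow> 'a measure" and Tm :: real
    and Qc Qv K Pc Pv q p h :: "real \<Rightarrow> 'a \<Rightarrow> real"
    and \<tau>s \<theta> :: "'a \<Rightarrow> real"
  assumes prob: "prob_space M"
    and filt: "usual_filtration M F Tm"
    and Qc: "adapted F Tm Qc" "cadlag M Tm Qc" "\<forall>\<omega>\<in>space M. Qc 0 \<omega> = 0"
    and Qv: "adapted F Tm Qv" "cadlag M Tm Qv" "callable_value M F Tm Qc Qv"
    and K: "adapted F Tm K" "cadlag M Tm K" "is_drift M F Tm (\<lambda>t \<omega>. Qc t \<omega> + Qv t \<omega>) K"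
    and Pc: "adapted F Tm Pc" "cadlag M Tm Pc" "\<forall>\<omega>\<in>space M. Pc 0 \<omega> = 0"
    and Pv: "adapted F Tm Pv" "cadlag M Tm Pv"
            "\<forall>t\<in>{0..Tm}. AE \<omega> in M. Pv t \<omega> = va M F Tm Pc t \<omega>"
    and q: "semimartingale M F Tm q" "\<forall>\<omega>\<in>space M. q Tm \<omega> = 0"
    and p: "semimartingale M F Tm p"
    and \<tau>s: "stopping_time F \<tau>s" "\<forall>\<omega>\<in>space M. \<tau>s \<omega> \<in> {0<..Tm}"
    and \<theta>: "stopping_time_in M F 0 Tm \<theta>"
    and h: "martingale M F Tm h" "cadlag M Tm h"
           "\<forall>t\<in>{0..Tm}. \<forall>\<omega>\<in>space M. h t \<omega> = stopped h \<theta> t \<omega>"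
    and integr: "\<forall>X\<in>{Qc, Qv, K, Pc, Pv, q, p, h}. \<forall>\<sigma>. stopping_time_in M F 0 Tm \<sigma> \<longrightarrow>
                   integrable M (\<lambda>\<omega>. X (\<sigma> \<omega>) \<omega>)"
    and bad1: "\<forall>\<omega>\<in>space M. \<theta> \<omega> \<le> \<tau>s \<omega>"
    and bad2: "\<forall>t\<in>{0..Tm}. \<forall>\<omega>\<in>space M. t < \<tau>s \<omega> \<longrightarrow> p t \<omega> = Pv t \<omega>"
    and bad3: "\<forall>\<omega>\<in>space M. ind_before \<tau>s (\<theta> \<omega>) \<omega> * q (\<theta> \<omega>) \<omega> = 0"
  defines "Js \<equiv> ind_before \<tau>s"
    and "Je \<equiv> ind_before \<theta>"
    and "PNL \<equiv> pnl Qc Qv q Pc Pv p \<tau>s \<theta> h"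
    and "HVA \<equiv> (\<lambda>t \<omega>. - va M F Tm (pnl Qc Qv q Pc Pv p \<tau>s \<theta> h) t \<omega>)"
    and "D \<equiv> (\<lambda>t. real_cond_exp M (F t) (\<lambda>\<omega>. ind_before \<tau>s (\<theta> \<omega>) \<omega> * Qv (\<theta> \<omega>) \<omega>))"
    and "D' \<equiv> (\<lambda>t. real_cond_exp M (F t) (\<lambda>\<omega>. (1 - ind_before \<tau>s (\<theta> \<omega>) \<omega>) * Qv (\<theta> \<omega>) \<omega>))"
    and "VK \<equiv> va M F Tm (stopped K \<theta>)"
  shows
    "(\<forall>t\<in>{0..Tm}. \<forall>\<omega>\<in>space M. PNL t \<omega> =
        from0 (stopped (\<lambda>s \<omega>. Qc s \<omega> + Js s \<omega> * q s \<omega> + (1 - Js s \<omega>) * Qv s \<omega>) \<theta>) t \<omega>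
      - from0 (stopped (\<lambda>s \<omega>. Pc s \<omega> + Pv s \<omega>) \<theta>) t \<omega>
      - h t \<omega> - (1 - Je t \<omega>) * (1 - Js (\<theta> \<omega>) \<omega>) * Qv (\<theta> \<omega>) \<omega>)
   \<and> (\<forall>t\<in>{0..Tm}. AE \<omega> in M. HVA t \<omega> =
        stopped (\<lambda>s \<omega>. Js s \<omega> * (q s \<omega> - Qv s \<omega>)) \<theta> t \<omega> + D t \<omega> + Je t \<omega> * D' t \<omega> + VK t \<omega>)
   \<and> (\<forall>t\<in>{0..Tm}. AE \<omega> in M. VK t \<omega> =
        Qc (min t (\<theta> \<omega>)) \<omega> + Qv (min t (\<theta> \<omega>)) \<omega>
        - real_cond_exp M (F t) (\<lambda>\<omega>. Qc (\<theta> \<omega>) \<omega> + Qv (\<theta> \<omega>) \<omega>) \<omega>)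
   \<and> (AE \<omega> in M. HVA 0 \<omega> = q 0 \<omega> - real_cond_exp M (F 0) (\<lambda>\<omega>. Qc (\<theta> \<omega>) \<omega>) \<omega>)
   \<and> (\<forall>t\<in>{0..Tm}. AE \<omega> in M. - PNL t \<omega> + (HVA t \<omega> - HVA 0 \<omega>) =
        - from0 (stopped (\<lambda>s \<omega>. Qc s \<omega> + Qv s \<omega>) \<theta>) t \<omega>
        + from0 (stopped (\<lambda>s \<omega>. Pc s \<omega> + Pv s \<omega>) \<theta>) t \<omega>
        + h t \<omega> + (1 - Je t \<omega>) * (1 - Js (\<theta> \<omega>) \<omega>) * Qv (\<theta> \<omega>) \<omega>
        + (D t \<omega> - D 0 \<omega>) + (Je t \<omega> * D' t \<omega> - Je 0 \<omega> * D' 0 \<omega>) + (VK t \<omega> - VK 0 \<omega>))"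
proof -
  have "filtered_prob_space M F"
    using prob filt by (simp add: filtered_prob_space_def filtered_prob_space_axioms_def usual_filtration_def)
  moreover have "bad_trader_axioms M F Tm Qc Qv K Pc Pv q p h \<tau>s \<theta>"
    unfolding bad_trader_axioms_def
    using Qc Qv Pc Pv q(1) K(1,2) integr h(1) \<tau>s \<theta> bad2 bad3 K(3)[unfolded is_drift_def]
    by (auto simp: semimartingale_def cadlag_imp_right_continuous_paths)
  ultimately interpret bad_trader M F Tm Qc Qv K Pc Pv q p h \<tau>s \<theta>
    by (rule bad_trader.intro)
  show ?thesis
    unfolding Js_def Je_def PNL_def HVA_def D_def D'_def VK_def
    using pnl_eq hva_eq va_stopped_drift_eq hva_0_eq pnl_hva_decomposition by blast
qed

end
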